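(* Assume the setting, regularity assumptions and Conditions (C1)–(C3) described in the context. Then $$\big\|D_{r_n}^T\Sigma_{n,g}^{-1}D_{r_n}-D_m^T\widetilde\Sigma^{-1}D_m\big\|=o(1)\quad (n\to\infty),$$ where $D_{r_n}=E(\partial g_{r_n}(\beta_0)/\partial\beta^T)$ and $D_m=E(\partial m(\beta_0;Y,Z)/\partial\beta^T)$.
   Context: Setting: $(Y,Z,X)$ with $Y$ an outcome, $Z\in\{0,1,\dots,K\}$ a randomized treatment indicator with known probabilities $\pi_k=P(Z=k)$, $\sum_k\pi_k=1$, and $X$ a covariate vector independent of $Z$. Let $m(\beta;Y,Z)$ be a $q$-dimensional estimating function with parameter $\beta\in\mathbb{R}^q$, $\beta_0$ the true value with $E\,m(\beta_0;Y,Z)=0$. Regularity assumptions on $m$: $D_m$ has full rank $q$; near $\beta_0$, $\partial m/\partial\beta^T$ and $\partial^2 m/\partial\beta\partial\beta^T$ are continuous in $\beta$ with norms bounded by an integrable function. For each $n$, let $r_n>q$ and $V_n$ an $(r_n-q)$-vector whose $j$-th component is $(1_{(Z=k_j)}-\pi_{k_j})h_j(X)$ for some $k_j$ and real function $h_j$. Conditions: (C1) there is a non-random $(r_n-q)\times(r_n-q)$ matrix $W_n$ such that, with $g_{r_n}(\beta)=(m(\beta;Y,Z)^T,(W_nV_n)^T)^T$: (i) the components of $g_{r_n}$ are uniformly bounded by a finite constant $M>0$; (ii) the eigenvalues of $\Sigma_{n,g}=E(g_{r_n}(\beta_0)g_{r_n}(\beta_0)^T)$ are bounded away from zero and infinity;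 (iii) there is a non-random $q\times(r_n-q)$ matrix $A_n$ with $A_nW_nV_n\to\sum_{k=0}^K(1_{(Z=k)}-\pi_k)E(m(\beta_0;Y,Z)\mid Z=k,X)$ in $L^2$. (C2) $r_n^3=o(n)$. (C3) $\widetilde{\Sigma}=E(\widetilde m\widetilde m^T)$ is positive definite, where $\widetilde m=m(\beta_0;Y,Z)-\sum_{k=0}^K(1_{(Z=k)}-\pi_k)E(m(\beta_0;Y,Z)\mid Z=k,X)$. *)

theory Defs
  imports "HOL-Probability.Probability" "Jordan_Normal_Form.Char_Poly"
    "Jordan_Normal_Form.Gauss_Jordan_Elimination" "Jordan_Normal_Form.DL_Rank"
begin

no_notation Matrix.vec_index (infixl \<open>$\<close> 100)

text \<open>The parameter space is real^'q (so q = CARD('q)).  To pass to the varying-dimension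
  matrices of the JNF library we fix once and for all an enumeration of the coordinates.\<close>

definition qidx :: "nat \<Rightarrow> 'q::finite" where
  "qidx = (SOME f. bij_betw f {..<CARD('q)} UNIV)"

definition tovec :: "real^'q::finite \<Rightarrow> real vec" where
  "tovec u = vec CARD('q) (\<lambda>i. u $ qidx i)"

definition Vvec :: "nat \<Rightarrow> ('w \<Rightarrow> nat) \<Rightarrow> ('w \<Rightarrow> 'x) \<Rightarrow> (nat \<Rightarrow> real) \<Rightarrow> (nat \<Rightarrow> nat)
    \<Rightarrow> (nat \<Rightarrow> 'x \<Rightarrow> real) \<Rightarrow> 'w \<Rightarrow> real vec" where
  "Vvec d Z X \<pi> k h \<omega> = vec d (\<lambda>j. (of_bool (Z \<omega> = k j) - \<pi> (k j)) * h j (X \<omega>))"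

definition gvec :: "(real^'q::finite \<Rightarrow> 'y \<Rightarrow> nat \<Rightarrow> real^'q) \<Rightarrow> ('w \<Rightarrow> 'y) \<Rightarrow> ('w \<Rightarrow> nat)
    \<Rightarrow> real mat \<Rightarrow> ('w \<Rightarrow> real vec) \<Rightarrow> real^'q \<Rightarrow> 'w \<Rightarrow> real vec" where
  "gvec m Y Z W V \<beta> \<omega> = tovec (m \<beta> (Y \<omega>) (Z \<omega>)) @\<^sub>v (W *\<^sub>v V \<omega>)"

definition smom :: "'w measure \<Rightarrow> nat \<Rightarrow> ('w \<Rightarrow> real vec) \<Rightarrow> real mat" where
  "smom M d f = mat d d (\<lambda>(a,b). LINT \<omega>|M. vec_index (f \<omega>) a * vec_index (f \<omega>) b)"

definition jac_exp :: "'w measure \<Rightarrow> nat \<Rightarrow> (real^'q::finite \<Rightarrow> 'w \<Rightarrow> real vec) \<Rightarrow> real^'q \<Rightarrow> real mat" where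
  "jac_exp M d G \<beta>0 = mat d CARD('q)
     (\<lambda>(a,j). LINT \<omega>|M. deriv (\<lambda>t. vec_index (G (\<beta>0 + t *\<^sub>R axis (qidx j) 1) \<omega>) a) 0)"

text \<open>Conditional expectation E(f | Z = k, X) = E(f 1(Z=k) | X) / P(Z = k | X),
  where conditioning on X means conditioning on the sigma-algebra generated by X.\<close>
definition cexp_ZX :: "'w measure \<Rightarrow> ('w \<Rightarrow> 'x) \<Rightarrow> 'x measure \<Rightarrow> ('w \<Rightarrow> nat)
    \<Rightarrow> ('w \<Rightarrow> real) \<Rightarrow> nat \<Rightarrow> 'w \<Rightarrow> real" where
  "cexp_ZX M X MX Z f k \<omega> =
     real_cond_exp M (vimage_algebra (space M) X MX) (\<lambda>w. f w * of_bool (Z w = k)) \<omega>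
     / real_cond_exp M (vimage_algebra (space M) X MX) (\<lambda>w. of_bool (Z w = k)) \<omega>"

definition aug_term :: "'w measure \<Rightarrow> ('w \<Rightarrow> 'x) \<Rightarrow> 'x measure \<Rightarrow> ('w \<Rightarrow> nat) \<Rightarrow> nat
    \<Rightarrow> (nat \<Rightarrow> real) \<Rightarrow> ('w \<Rightarrow> real^'q::finite) \<Rightarrow> 'w \<Rightarrow> real^'q" where
  "aug_term M X MX Z K \<pi> f \<omega> =
     (\<chi> i. \<Sum>k\<in>{0..K}. (of_bool (Z \<omega> = k) - \<pi> k) * cexp_ZX M X MX Z (\<lambda>w. f w $ i) k \<omega>)"

definition minv :: "real mat \<Rightarrow> real mat" where
  "minv A = the (mat_inverse A)"

definition fro_norm :: "real mat \<Rightarrow> real" where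
  "fro_norm A = sqrt (\<Sum>i<dim_row A. \<Sum>j<dim_col A. (A $$ (i,j))\<^sup>2)"

end

theory Submission
  imports Defs
begin

text \<open>Since \<open>W\<^sub>n V\<^sub>n\<close> does not depend on \<open>\<beta>\<close>, \<open>D\<^sub>r\<^sub>n = (D\<^sub>m; 0)\<close> and
  \<open>D\<^sub>r\<^sub>n\<^sup>T \<Sigma>\<^sub>n\<^sub>,\<^sub>g\<^sup>-\<^sup>1 D\<^sub>r\<^sub>n = D\<^sub>m\<^sup>T P\<^sub>n D\<^sub>m\<close>, where \<open>P\<^sub>n\<close> is the leading
  \<open>q \<times> q\<close> block of \<open>\<Sigma>\<^sub>n\<^sub>,\<^sub>g\<^sup>-\<^sup>1\<close>; so it suffices that \<open>P\<^sub>n \<longrightarrow> \<Sigma>\<^sup>~\<^sup>-\<^sup>1\<close>.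
  Let \<open>S\<close> be the augmentation term. Because \<open>Z\<close> is independent of \<open>X\<close>, the residual \<open>m - S\<close> is
  orthogonal to every \<open>(1(Z = k) - \<pi>\<^sub>k) \<phi>(X)\<close>, hence to \<open>S\<close> and to all components of
  \<open>W\<^sub>n V\<^sub>n\<close>. With \<open>\<eta>\<^sub>i\<close> the combination of the components of \<open>g\<close> given by the \<open>i\<close>-th row of
  \<open>\<Sigma>\<^sub>n\<^sub>,\<^sub>g\<^sup>-\<^sup>1\<close> one has \<open>E \<eta>\<^sub>i\<^sup>2 = (P\<^sub>n)\<^sub>i\<^sub>i\<close> and
  \<open>(P\<^sub>n \<Sigma>\<^sup>~ - I)\<^sub>i\<^sub>j = E(\<eta>\<^sub>i ((A\<^sub>n W\<^sub>n V\<^sub>n)\<^sub>j - S\<^sub>j))\<close>, so by Cauchy--Schwarz its square is at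
  most \<open>(P\<^sub>n)\<^sub>i\<^sub>i \<delta>\<^sub>n\<close> with \<open>\<delta>\<^sub>n = E|A\<^sub>n W\<^sub>n V\<^sub>n - S|\<^sup>2 \<longrightarrow> 0\<close> by (C1)(iii).
  Such an estimate forces \<open>P\<^sub>n \<longrightarrow> \<Sigma>\<^sup>~\<^sup>-\<^sup>1\<close>.\<close>

section \<open>Essentially bounded functions\<close>

definition ess_bounded :: "'a measure \<Rightarrow> ('a \<Rightarrow> real) \<Rightarrow> bool" where
  "ess_bounded M f \<longleftrightarrow> f \<in> borel_measurable M \<and> (\<exists>B. AE x in M. \<bar>f x\<bar> \<le> B)"

lemma ess_boundedI: "f \<in> borel_measurable M \<Longrightarrow> AE x in M. \<bar>f x\<bar> \<le> B \<Longrightarrow> ess_bounded M f"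
  unfolding ess_bounded_def by auto

lemma ess_bounded_measurable: "ess_bounded M f \<Longrightarrow> f \<in> borel_measurable M"
  by (simp add: ess_bounded_def)

lemma ess_bounded_const [intro]: "ess_bounded M (\<lambda>_. c)"
  unfolding ess_bounded_def by auto

lemma ess_bounded_add [intro]:
  "ess_bounded M f \<Longrightarrow> ess_bounded M g \<Longrightarrow> ess_bounded M (\<lambda>x. f x + g x)"
  unfolding ess_bounded_def
proof (elim conjE exE, intro conjI)
  fix B C assume "AE x in M. \<bar>f x\<bar> \<le> B" "AE x in M. \<bar>g x\<bar> \<le> C"
  then show "\<exists>B. AE x in M. \<bar>f x + g x\<bar> \<le> B"
    by (intro exI[of _ "B + C"]) (auto elim!: AE_mp)
qed auto

lemma ess_bounded_mult [intro]:
  "ess_bounded M f \<Longrightarrow> ess_bounded M g \<Longrightarrow> ess_bounded M (\<lambda>x. f x * g x)"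
  unfolding ess_bounded_def
proof (elim conjE exE, intro conjI)
  fix B C assume "AE x in M. \<bar>f x\<bar> \<le> B" "AE x in M. \<bar>g x\<bar> \<le> C"
  then show "\<exists>B. AE x in M. \<bar>f x * g x\<bar> \<le> B"
  proof (intro exI[of _ "B * C"], elim AE_mp, intro AE_I2 impI)
    fix x assume "\<bar>f x\<bar> \<le> B" "\<bar>g x\<bar> \<le> C"
    then show "\<bar>f x * g x\<bar> \<le> B * C"
      by (simp add: abs_mult mult_mono')
  qed
qed auto

lemma ess_bounded_diff [intro]:
  "ess_bounded M f \<Longrightarrow> ess_bounded M g \<Longrightarrow> ess_bounded M (\<lambda>x. f x - g x)"
  using ess_bounded_add[OF _ ess_bounded_mult[OF ess_bounded_const[of M "- 1"]], of f g] by simp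

lemma ess_bounded_sum [intro]:
  "(\<And>i. i \<in> I \<Longrightarrow> ess_bounded M (f i)) \<Longrightarrow> ess_bounded M (\<lambda>x. \<Sum>i\<in>I. f i x)"
  by (induction I rule: infinite_finite_induct) auto

lemma (in finite_measure) integrable_ess_bounded: "ess_bounded M f \<Longrightarrow> integrable M f"
  unfolding ess_bounded_def using integrable_const_bound[of f] by auto

lemma Cauchy_Schwarz_integral:
  fixes f g :: "'a \<Rightarrow> real"
  assumes [measurable]: "f \<in> borel_measurable M" "g \<in> borel_measurable M"
    and "integrable M (\<lambda>x. (f x)\<^sup>2)" "integrable M (\<lambda>x. (g x)\<^sup>2)"
  shows "(\<integral>x. f x * g x \<partial>M)\<^sup>2 \<le> (\<integral>x. (f x)\<^sup>2 \<partial>M) * (\<integral>x. (g x)\<^sup>2 \<partial>M)"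
proof -
  define C where "C = (\<integral>x. (f x)\<^sup>2 \<partial>M) * (\<integral>x. (g x)\<^sup>2 \<partial>M)"
  have C0: "0 \<le> C" unfolding C_def by (intro mult_nonneg_nonneg integral_nonneg) auto
  have "(\<integral>\<^sup>+x. ennreal \<bar>f x\<bar> * ennreal \<bar>g x\<bar> \<partial>M)\<^sup>2
      \<le> (\<integral>\<^sup>+x. ennreal \<bar>f x\<bar> ^ 2 \<partial>M) * (\<integral>\<^sup>+x. ennreal \<bar>g x\<bar> ^ 2 \<partial>M)"
    by (rule Cauchy_Schwarz_nn_integral) auto
  also have "(\<integral>\<^sup>+x. ennreal \<bar>f x\<bar> ^ 2 \<partial>M) = ennreal (\<integral>x. (f x)\<^sup>2 \<partial>M)"
    using assms(3) by (simp add: ennreal_power nn_integral_eq_integral)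
  also have "(\<integral>\<^sup>+x. ennreal \<bar>g x\<bar> ^ 2 \<partial>M) = ennreal (\<integral>x. (g x)\<^sup>2 \<partial>M)"
    using assms(4) by (simp add: ennreal_power nn_integral_eq_integral)
  finally have nn: "(\<integral>\<^sup>+x. ennreal \<bar>f x * g x\<bar> \<partial>M)\<^sup>2 \<le> ennreal C"
    by (simp add: C_def abs_mult ennreal_mult ennreal_mult')
  moreover have "ennreal C < \<infinity>" by simp
  ultimately have "(\<integral>\<^sup>+x. ennreal \<bar>f x * g x\<bar> \<partial>M)\<^sup>2 < \<infinity>" by (rule le_less_trans)
  then have "integrable M (\<lambda>x. f x * g x)"
    by (intro integrableI_bounded) (simp_all add: power_less_top_ennreal)
  then have "ennreal ((\<integral>x. \<bar>f x * g x\<bar> \<partial>M)\<^sup>2) \<le> ennreal C"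
    using nn by (simp add: nn_integral_eq_integral ennreal_power)
  then have "(\<integral>x. \<bar>f x * g x\<bar> \<partial>M)\<^sup>2 \<le> C"
    using ennreal_le_iff[of C] C0 by simp
  moreover have "\<bar>\<integral>x. f x * g x \<partial>M\<bar>\<^sup>2 \<le> (\<integral>x. \<bar>f x * g x\<bar> \<partial>M)\<^sup>2"
    by (intro power_mono integral_abs_bound) simp
  ultimately show ?thesis
    unfolding C_def power2_abs by linarith
qed

section \<open>Approximate inverses\<close>

lemma sum_lessThan_add: "(\<Sum>a<q + d. f a) = (\<Sum>a<q. f a) + (\<Sum>b<d. f (q + b))"
  for f :: "nat \<Rightarrow> 'a::comm_monoid_add"
  by (induction d) (auto simp: add.assoc)

lemma sum_of_bool_mult:
  fixes f :: "'b \<Rightarrow> 'a::semiring_1"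
  assumes "finite I" "i \<in> I"
  shows "(\<Sum>k\<in>I. of_bool (k = i) * f k) = f i" "(\<Sum>k\<in>I. of_bool (i = k) * f k) = f i"
  using assms by (simp_all add: of_bool_def if_distrib[of "\<lambda>x. x * f _"] sum.delta sum.delta' cong: if_cong)

lemma approx_inverse_expansion:
  fixes Q S T :: "nat \<Rightarrow> nat \<Rightarrow> real"
  assumes ST: "\<forall>a b. a < q \<longrightarrow> b < q \<longrightarrow> (\<Sum>k<q. S a k * T k b) = of_bool (a = b)"
    and ij: "i < q" "j < q"
  shows "Q i j = T i j + (\<Sum>k<q. ((\<Sum>a<q. Q i a * S a k) - of_bool (i = k)) * T k j)"
proof -
  have "(\<Sum>k<q. ((\<Sum>a<q. Q i a * S a k) - of_bool (i = k)) * T k j)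
      = (\<Sum>a<q. Q i a * (\<Sum>k<q. S a k * T k j)) - (\<Sum>k<q. of_bool (i = k) * T k j)"
    by (simp add: left_diff_distrib sum_subtractf sum_distrib_left sum_distrib_right mult.assoc)
       (rule sum.swap)
  also have "\<dots> = Q i j - T i j"
    using ST ij by (simp add: mult.commute[of "Q i _"] sum_of_bool_mult)
  finally show ?thesis by simp
qed

lemma le_max_if_square_le:
  fixes x C0 C1 :: real
  assumes "0 \<le> C0" "x\<^sup>2 \<le> C0 + C1 * x"
  shows "x \<le> max 1 (C0 + C1)"
proof (cases "x \<le> 1")
  case False
  then have "C0 \<le> C0 * x" using assms(1) by (simp add: mult_le_cancel_left1)
  with assms(2) have "x * x \<le> (C0 + C1) * x" by (simp add: power2_eq_square algebra_simps)
  with False show ?thesis by simp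
qed simp

text \<open>Through \<open>Q\<^sub>n = T + (Q\<^sub>n S - I) T\<close> the residual bound dominates \<open>Q\<^sub>n\<^sub>i\<^sub>i\<close> by an affine
  function of \<open>\<surd>Q\<^sub>n\<^sub>i\<^sub>i\<close>; so \<open>Q\<^sub>n\<^sub>i\<^sub>i\<close> stays bounded and the residual vanishes.\<close>

lemma tendsto_inverse_if_residual_bound:
  fixes Q :: "nat \<Rightarrow> nat \<Rightarrow> nat \<Rightarrow> real" and S T :: "nat \<Rightarrow> nat \<Rightarrow> real" and \<delta> :: "nat \<Rightarrow> real"
  assumes \<delta>: "\<delta> \<longlonglongrightarrow> 0" "\<forall>n. 0 \<le> \<delta> n"
    and diag: "\<forall>n i. i < q \<longrightarrow> 0 \<le> Q n i i"
    and residual: "\<forall>n i j. i < q \<longrightarrow> j < q \<longrightarrow>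
      ((\<Sum>a<q. Q n i a * S a j) - of_bool (i = j))\<^sup>2 \<le> Q n i i * \<delta> n"
    and ST: "\<forall>a b. a < q \<longrightarrow> b < q \<longrightarrow> (\<Sum>k<q. S a k * T k b) = of_bool (a = b)"
    and ij: "i < q" "j < q"
  shows "(\<lambda>n. Q n i j) \<longlonglongrightarrow> T i j"
proof -
  define E where "E n k = (\<Sum>a<q. Q n i a * S a k) - of_bool (i = k)" for n k
  define s where "s n = sqrt (\<delta> n)" for n
  have s: "s \<longlonglongrightarrow> 0" "\<And>n. 0 \<le> s n"
    unfolding s_def using tendsto_real_sqrt[OF \<delta>(1)] \<delta>(2) by auto
  have E_le: "\<bar>E n k\<bar> \<le> sqrt (Q n i i) * s n" if "k < q" for n k
    using real_sqrt_le_mono[OF residual[rule_format, OF ij(1) that, of n]] \<delta>(2)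
    by (simp add: E_def s_def real_sqrt_mult)
  define C0 where "C0 = \<bar>T i i\<bar>"
  define C1 where "C1 = (\<Sum>k<q. \<bar>T k i\<bar>)"
  have diag_le: "sqrt (Q n i i) \<le> max 1 (C0 + C1 * s n)" for n
  proof (rule le_max_if_square_le)
    have "\<bar>E n k * T k i\<bar> \<le> (sqrt (Q n i i) * s n) * \<bar>T k i\<bar>" if "k < q" for k
      unfolding abs_mult using E_le[OF that] by (rule mult_right_mono) simp
    then have "T i i + (\<Sum>k<q. E n k * T k i) \<le> C0 + (\<Sum>k<q. (sqrt (Q n i i) * s n) * \<bar>T k i\<bar>)"
      unfolding C0_def by (intro add_mono sum_mono) (auto dest: abs_le_D1)
    then show "(sqrt (Q n i i))\<^sup>2 \<le> C0 + C1 * s n * sqrt (Q n i i)"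
      unfolding approx_inverse_expansion[OF ST ij(1) ij(1), of "Q n", folded E_def, symmetric]
      using diag ij by (simp add: C1_def sum_distrib_left algebra_simps)
  qed (simp add: C0_def)
  have "(\<lambda>n. E n k) \<longlonglongrightarrow> 0" if "k < q" for k
  proof (rule Lim_null_comparison)
    show "\<forall>\<^sub>F n in sequentially. norm (E n k) \<le> max 1 (C0 + C1 * s n) * s n"
      using order.trans[OF E_le[OF that] mult_right_mono[OF diag_le s(2)]] by simp
    have "(\<lambda>n. max 1 (C0 + C1 * s n) * s n) \<longlonglongrightarrow> max 1 (C0 + C1 * 0) * 0"
      by (intro tendsto_intros s(1))
    then show "(\<lambda>n. max 1 (C0 + C1 * s n) * s n) \<longlonglongrightarrow> 0" by simp
  qed
  then have "(\<lambda>n. T i j + (\<Sum>k<q. E n k * T k j)) \<longlonglongrightarrow> T i j + (\<Sum>k<q. 0 * T k j)"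
    by (intro tendsto_intros) auto
  then show ?thesis
    using approx_inverse_expansion[OF ST ij] unfolding E_def by simp
qed

lemma index_mult_mat_sum:
  fixes A B :: "'a::comm_semiring_0 mat"
  assumes "A \<in> carrier_mat n m" "B \<in> carrier_mat m p" "i < n" "j < p"
  shows "(A * B) $$ (i,j) = (\<Sum>k<m. A $$ (i,k) * B $$ (k,j))"
  using assms by (auto simp: scalar_prod_def atLeast0LessThan intro!: sum.cong)

lemma minv_inverse:
  fixes S :: "real mat"
  assumes S: "S \<in> carrier_mat n n" and det: "det S \<noteq> 0"
  shows "S * minv S = 1\<^sub>m n" "minv S * S = 1\<^sub>m n" "minv S \<in> carrier_mat n n"
proof -
  have "S \<in> Units (ring_mat TYPE(real) n ())" by (rule det_non_zero_imp_unit[OF S det])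
  then obtain B where B: "mat_inverse S = Some B"
    using mat_inverse(1)[OF S, of "()"] by (cases "mat_inverse S") auto
  then show "S * minv S = 1\<^sub>m n" "minv S * S = 1\<^sub>m n" "minv S \<in> carrier_mat n n"
    using mat_inverse(2)[OF S B] by (auto simp: minv_def)
qed

lemma sum_minv_mult:
  fixes S :: "real mat"
  assumes S: "S \<in> carrier_mat n n" "det S \<noteq> 0" and ij: "i < n" "j < n"
  shows "(\<Sum>k<n. minv S $$ (i,k) * S $$ (k,j)) = of_bool (i = j)"
    and "(\<Sum>k<n. S $$ (i,k) * minv S $$ (k,j)) = of_bool (i = j)"
proof -
  note inv = minv_inverse[OF S]
  have "(\<Sum>k<n. minv S $$ (i,k) * S $$ (k,j)) = (minv S * S) $$ (i,j)"
    by (rule index_mult_mat_sum[OF inv(3) S(1) ij, symmetric])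
  then show "(\<Sum>k<n. minv S $$ (i,k) * S $$ (k,j)) = of_bool (i = j)"
    using inv(2) ij by simp
  have "(\<Sum>k<n. S $$ (i,k) * minv S $$ (k,j)) = (S * minv S) $$ (i,j)"
    by (rule index_mult_mat_sum[OF S(1) inv(3) ij, symmetric])
  then show "(\<Sum>k<n. S $$ (i,k) * minv S $$ (k,j)) = of_bool (i = j)"
    using inv(1) ij by simp
qed

lemma det_neq_0_if_not_eigenvalue_0:
  fixes S :: "real mat"
  assumes S: "S \<in> carrier_mat n n" and no_ev: "\<not> eigenvalue S 0"
  shows "det S \<noteq> 0"
proof
  assume "det S = 0"
  then obtain v where "v \<in> carrier_vec n" "v \<noteq> 0\<^sub>v n" "S *\<^sub>v v = 0\<^sub>v n"
    using det_0_iff_vec_prod_zero[OF S] by auto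
  then have "eigenvector S v 0" using S unfolding eigenvector_def by auto
  with no_ev show False unfolding eigenvalue_def by blast
qed

lemma det_neq_0_if_pos_def:
  fixes S :: "real mat"
  assumes "S \<in> carrier_mat n n" "\<forall>v\<in>carrier_vec n. v \<noteq> 0\<^sub>v n \<longrightarrow> v \<bullet> (S *\<^sub>v v) > 0"
  shows "det S \<noteq> 0"
  using assms det_0_iff_vec_prod_zero[OF assms(1)] by force

section \<open>Inverse Gram matrices\<close>

lemma (in prob_space) integral_gram_inverse_combination:
  fixes g :: "nat \<Rightarrow> 'a \<Rightarrow> real" and p :: "nat \<Rightarrow> real"
  assumes g: "\<forall>k<N. ess_bounded M (g k)"
    and gram: "\<forall>b<N. (\<Sum>k<N. p k * (\<integral>\<omega>. g k \<omega> * g b \<omega> \<partial>M)) = of_bool (i = b)"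
    and i: "i < N"
  shows "b < N \<Longrightarrow> (\<integral>\<omega>. (\<Sum>k<N. p k * g k \<omega>) * g b \<omega> \<partial>M) = of_bool (i = b)"
    and "(\<integral>\<omega>. (\<Sum>k<N. p k * g k \<omega>)\<^sup>2 \<partial>M) = p i"
proof -
  define \<eta> where "\<eta> \<omega> = (\<Sum>k<N. p k * g k \<omega>)" for \<omega>
  have \<eta>: "ess_bounded M \<eta>" unfolding \<eta>_def using g by (intro ess_bounded_sum ess_bounded_mult) auto
  have \<eta>_g: "(\<integral>\<omega>. \<eta> \<omega> * g b \<omega> \<partial>M) = of_bool (i = b)" if "b < N" for b
  proof -
    have "(\<integral>\<omega>. \<eta> \<omega> * g b \<omega> \<partial>M) = (\<integral>\<omega>. (\<Sum>k<N. p k * (g k \<omega> * g b \<omega>)) \<partial>M)"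
      unfolding \<eta>_def by (simp add: sum_distrib_right mult.assoc)
    also have "\<dots> = (\<Sum>k<N. p k * (\<integral>\<omega>. g k \<omega> * g b \<omega> \<partial>M))"
      using g that by (subst Bochner_Integration.integral_sum) (auto intro!: integrable_ess_bounded)
    finally show ?thesis using gram that by simp
  qed
  then show "b < N \<Longrightarrow> (\<integral>\<omega>. (\<Sum>k<N. p k * g k \<omega>) * g b \<omega> \<partial>M) = of_bool (i = b)"
    unfolding \<eta>_def .
  have "(\<integral>\<omega>. (\<eta> \<omega>)\<^sup>2 \<partial>M) = (\<integral>\<omega>. (\<Sum>k<N. p k * (\<eta> \<omega> * g k \<omega>)) \<partial>M)"
    by (simp add: power2_eq_square \<eta>_def[of \<omega> for \<omega>] sum_distrib_left algebra_simps)
  also have "\<dots> = (\<Sum>k<N. p k * of_bool (i = k))"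
    using g \<eta> \<eta>_g by (subst Bochner_Integration.integral_sum) (auto intro!: integrable_ess_bounded)
  also have "\<dots> = p i" using sum_of_bool_mult(2)[of "{..<N}" i p] i by (simp add: mult.commute)
  finally show "(\<integral>\<omega>. (\<Sum>k<N. p k * g k \<omega>)\<^sup>2 \<partial>M) = p i" unfolding \<eta>_def .
qed

text \<open>\<open>p\<close> is the \<open>i\<close>-th row of the inverse Gram matrix of \<open>g\<^sub>0, \<dots>, g\<^sub>q\<^sub>+\<^sub>d\<^sub>-\<^sub>1\<close>. The
  orthogonality hypotheses turn the residual into \<open>E(\<eta> ((\<Sum>\<^sub>b a\<^sub>j\<^sub>b g\<^sub>q\<^sub>+\<^sub>b) - S\<^sub>j))\<close> with
  \<open>\<eta> = \<Sum>\<^sub>k p\<^sub>k g\<^sub>k\<close>, and Cauchy--Schwarz with \<open>E \<eta>\<^sup>2 = p\<^sub>i\<close> bounds it.\<close>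

lemma (in prob_space) gram_inverse_residual_bound:
  fixes g S :: "nat \<Rightarrow> 'a \<Rightarrow> real" and p :: "nat \<Rightarrow> real" and a :: "nat \<Rightarrow> nat \<Rightarrow> real"
  assumes g: "\<forall>k<q+d. ess_bounded M (g k)" and S: "\<forall>k<q. ess_bounded M (S k)"
    and gram: "\<forall>b<q+d. (\<Sum>k<q+d. p k * (\<integral>\<omega>. g k \<omega> * g b \<omega> \<partial>M)) = of_bool (i = b)"
    and orth_g: "\<forall>j<q. \<forall>b<d. (\<integral>\<omega>. (g j \<omega> - S j \<omega>) * g (q+b) \<omega> \<partial>M) = 0"
    and orth_S: "\<forall>j<q. \<forall>k<q. (\<integral>\<omega>. (g j \<omega> - S j \<omega>) * S k \<omega> \<partial>M) = 0"
    and ij: "i < q" "j < q"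
  shows "0 \<le> p i"
    and "((\<Sum>k<q. p k * (\<integral>\<omega>. (g k \<omega> - S k \<omega>) * (g j \<omega> - S j \<omega>) \<partial>M)) - of_bool (i = j))\<^sup>2
       \<le> p i * (\<integral>\<omega>. (\<Sum>j'<q. ((\<Sum>b<d. a j' b * g (q+b) \<omega>) - S j' \<omega>)\<^sup>2) \<partial>M)"
proof -
  define \<eta> where "\<eta> \<omega> = (\<Sum>k<q+d. p k * g k \<omega>)" for \<omega>
  define e where "e j' \<omega> = (\<Sum>b<d. a j' b * g (q+b) \<omega>) - S j' \<omega>" for j' \<omega>
  note I = integrable_ess_bounded
  have \<eta>: "ess_bounded M \<eta>" unfolding \<eta>_def using g by (intro ess_bounded_sum ess_bounded_mult) auto
  have e: "ess_bounded M (e j')" if "j' < q" for j'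
    unfolding e_def using that g S by (intro ess_bounded_diff ess_bounded_sum ess_bounded_mult) auto
  have \<eta>_g: "(\<integral>\<omega>. \<eta> \<omega> * g b \<omega> \<partial>M) = of_bool (i = b)" if "b < q+d" for b
    unfolding \<eta>_def using integral_gram_inverse_combination(1)[OF g gram _ that] ij by simp
  have \<eta>_sq: "(\<integral>\<omega>. (\<eta> \<omega>)\<^sup>2 \<partial>M) = p i"
    unfolding \<eta>_def using integral_gram_inverse_combination(2)[OF g gram] ij by simp
  show p_nonneg: "0 \<le> p i" unfolding \<eta>_sq[symmetric] by simp
  have res_S: "(\<integral>\<omega>. g k \<omega> * (g j \<omega> - S j \<omega>) \<partial>M) = (\<integral>\<omega>. (g k \<omega> - S k \<omega>) * (g j \<omega> - S j \<omega>) \<partial>M)"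
    if "k < q" for k
  proof -
    have "(\<integral>\<omega>. g k \<omega> * (g j \<omega> - S j \<omega>) \<partial>M)
        = (\<integral>\<omega>. (g k \<omega> - S k \<omega>) * (g j \<omega> - S j \<omega>) + (g j \<omega> - S j \<omega>) * S k \<omega> \<partial>M)"
      by (rule Bochner_Integration.integral_cong) (auto simp: algebra_simps)
    then show ?thesis using that ij g S orth_S
      by (subst (asm) Bochner_Integration.integral_add) (auto intro!: I ess_bounded_mult ess_bounded_diff)
  qed
  have "(\<integral>\<omega>. \<eta> \<omega> * (g j \<omega> - S j \<omega>) \<partial>M) = (\<Sum>k<q+d. p k * (\<integral>\<omega>. g k \<omega> * (g j \<omega> - S j \<omega>) \<partial>M))"
    unfolding \<eta>_def sum_distrib_right using g S ij
    by (subst Bochner_Integration.integral_sum) (auto simp: mult.assoc intro!: I ess_bounded_mult ess_bounded_diff)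
  also have "\<dots> = (\<Sum>k<q. p k * (\<integral>\<omega>. (g k \<omega> - S k \<omega>) * (g j \<omega> - S j \<omega>) \<partial>M))"
    unfolding sum_lessThan_add using orth_g ij res_S by (simp add: mult.commute)
  finally have "(\<Sum>k<q. p k * (\<integral>\<omega>. (g k \<omega> - S k \<omega>) * (g j \<omega> - S j \<omega>) \<partial>M)) - of_bool (i = j)
      = (\<integral>\<omega>. \<eta> \<omega> * (g j \<omega> - S j \<omega>) \<partial>M) - (\<integral>\<omega>. \<eta> \<omega> * g j \<omega> \<partial>M)"
    using \<eta>_g[of j] ij by simp
  also have "\<dots> = (\<integral>\<omega>. \<eta> \<omega> * (\<Sum>b<d. a j b * g (q+b) \<omega>) \<partial>M) - (\<integral>\<omega>. \<eta> \<omega> * S j \<omega> \<partial>M)"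
  proof -
    have "(\<integral>\<omega>. \<eta> \<omega> * (\<Sum>b<d. a j b * g (q+b) \<omega>) \<partial>M)
        = (\<integral>\<omega>. (\<Sum>b<d. a j b * (\<eta> \<omega> * g (q+b) \<omega>)) \<partial>M)"
      by (simp add: sum_distrib_left algebra_simps)
    also have "\<dots> = (\<Sum>b<d. a j b * (\<integral>\<omega>. \<eta> \<omega> * g (q+b) \<omega> \<partial>M))"
      using g \<eta> by (subst Bochner_Integration.integral_sum) (auto intro!: I ess_bounded_mult)
    also have "\<dots> = 0" using ij by (simp add: \<eta>_g)
    finally show ?thesis using \<eta> g S ij
      by (simp add: right_diff_distrib Bochner_Integration.integral_diff I ess_bounded_mult)
  qed
  also have "\<dots> = (\<integral>\<omega>. \<eta> \<omega> * e j \<omega> \<partial>M)"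
    unfolding e_def right_diff_distrib using \<eta> g S ij
    by (subst Bochner_Integration.integral_diff) (auto intro!: I ess_bounded_mult ess_bounded_sum)
  finally have "((\<Sum>k<q. p k * (\<integral>\<omega>. (g k \<omega> - S k \<omega>) * (g j \<omega> - S j \<omega>) \<partial>M)) - of_bool (i = j))\<^sup>2
      \<le> (\<integral>\<omega>. (\<eta> \<omega>)\<^sup>2 \<partial>M) * (\<integral>\<omega>. (e j \<omega>)\<^sup>2 \<partial>M)"
    using \<eta> e[OF ij(2)]
    by (simp, intro Cauchy_Schwarz_integral ess_bounded_measurable I) (auto simp: power2_eq_square)
  also have "\<dots> \<le> p i * (\<integral>\<omega>. (\<Sum>j'<q. (e j' \<omega>)\<^sup>2) \<partial>M)"
    unfolding \<eta>_sq using e ij p_nonneg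
    by (intro mult_left_mono integral_mono member_le_sum)
       (auto simp: power2_eq_square intro!: I ess_bounded_mult ess_bounded_sum)
  finally show "((\<Sum>k<q. p k * (\<integral>\<omega>. (g k \<omega> - S k \<omega>) * (g j \<omega> - S j \<omega>) \<partial>M)) - of_bool (i = j))\<^sup>2
       \<le> p i * (\<integral>\<omega>. (\<Sum>j'<q. ((\<Sum>b<d. a j' b * g (q+b) \<omega>) - S j' \<omega>)\<^sup>2) \<partial>M)"
    unfolding e_def .
qed

section \<open>Randomized treatment and the augmentation term\<close>

lemma index_tovec: "a < CARD('q) \<Longrightarrow> vec_index (tovec (u :: real^'q::finite)) a = u $ qidx a"
  by (simp add: tovec_def)

lemma index_tovec_append:
  fixes u :: "real^'q::finite"
  assumes "a < CARD('q) + dim_vec x"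
  shows "vec_index (tovec u @\<^sub>v x) a = (if a < CARD('q) then u $ qidx a else vec_index x (a - CARD('q)))"
  using assms by (simp add: tovec_def)

lemma index_smom: "a < d \<Longrightarrow> b < d \<Longrightarrow> smom M d f $$ (a,b) = (\<integral>\<omega>. vec_index (f \<omega>) a * vec_index (f \<omega>) b \<partial>M)"
  and smom_carrier: "smom M d f \<in> carrier_mat d d"
  by (simp_all add: smom_def)

lemma index_mult_mat_Vvec:
  assumes "W \<in> carrier_mat d d" "b < d"
  shows "vec_index (W *\<^sub>v Vvec d Z X \<pi> kk h \<omega>) b
       = (\<Sum>k<d. W $$ (b,k) * ((of_bool (Z \<omega> = kk k) - \<pi> (kk k)) * h k (X \<omega>)))"
  using assms by (auto simp: Vvec_def scalar_prod_def atLeast0LessThan intro!: sum.cong)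

lemma scalar_prod_self_nonneg: "0 \<le> v \<bullet> (v :: real vec)"
  by (simp add: scalar_prod_def sum_nonneg)

lemma scalar_prod_self_mult_mat_vec_minus_tovec:
  fixes A :: "real mat" and s :: "real^'q::finite"
  assumes "A \<in> carrier_mat CARD('q) d" "x \<in> carrier_vec d"
  shows "(A *\<^sub>v x - tovec s) \<bullet> (A *\<^sub>v x - tovec s)
       = (\<Sum>j<CARD('q). ((\<Sum>b<d. A $$ (j,b) * vec_index x b) - s $ qidx j)\<^sup>2)"
  using assms
  by (auto simp: scalar_prod_def tovec_def atLeast0LessThan power2_eq_square intro!: sum.cong)

locale randomized_treatment = prob_space M for M :: "'w measure" +
  fixes X :: "'w \<Rightarrow> 'x" and MX :: "'x measure" and Z :: "'w \<Rightarrow> nat" and K :: nat and \<pi> :: "nat \<Rightarrow> real"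
  assumes Z_measurable: "Z \<in> measurable M (count_space UNIV)"
    and X_measurable: "X \<in> measurable M MX"
    and Z_le: "\<forall>\<omega>\<in>space M. Z \<omega> \<le> K"
    and pi_eq_prob: "\<forall>k. \<pi> k = measure M {\<omega> \<in> space M. Z \<omega> = k}"
    and Z_X_indep: "\<forall>k. \<forall>B\<in>sets MX. measure M ({\<omega>\<in>space M. Z \<omega> = k} \<inter> (X -` B \<inter> space M))
              = measure M {\<omega>\<in>space M. Z \<omega> = k} * measure M (X -` B \<inter> space M)"
begin

abbreviation sigma_X :: "'w measure" where
  "sigma_X \<equiv> vimage_algebra (space M) X MX"

lemma subalgebra_sigma_X: "subalgebra M sigma_X"
  unfolding subalgebra_def using sets_image_in_sets[OF refl X_measurable] by simp

sublocale sigma_X: finite_measure_subalgebra M sigma_X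
  by unfold_locales (rule subalgebra_sigma_X)

lemma measurable_from_sigma_X: "f \<in> borel_measurable sigma_X \<Longrightarrow> f \<in> borel_measurable M"
  by (rule measurable_from_subalg[OF subalgebra_sigma_X])

lemma measurable_compose_X:
  "f \<in> borel_measurable MX \<Longrightarrow> (\<lambda>\<omega>. f (X \<omega>)) \<in> borel_measurable sigma_X"
  by (rule measurable_compose[OF measurable_vimage_algebra1])
     (auto intro: measurable_space[OF X_measurable])

lemma sets_Z_eq [measurable]: "{\<omega>\<in>space M. Z \<omega> = k} \<in> sets M"
  using measurable_sets[OF Z_measurable, of "{k}"] by (simp add: vimage_def Int_def conj_commute)

lemma measurable_indicator_Z [measurable]: "(\<lambda>\<omega>. of_bool (Z \<omega> = k) :: real) \<in> borel_measurable M"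
proof -
  have "(\<lambda>\<omega>. indicator {\<omega>\<in>space M. Z \<omega> = k} \<omega> :: real) \<in> borel_measurable M" by simp
  then show ?thesis
    by (rule measurable_cong[THEN iffD1, rotated]) (auto simp: indicator_def)
qed

lemma ess_bounded_indicator_Z [intro]: "ess_bounded M (\<lambda>\<omega>. of_bool (Z \<omega> = k))"
  by (rule ess_boundedI[where B=1]) auto

lemma sum_indicator_Z: "\<omega> \<in> space M \<Longrightarrow> (\<Sum>k\<in>{0..K}. of_bool (Z \<omega> = k) :: real) = 1"
  using Z_le by (simp add: of_bool_def sum.delta')

lemma pi_eq_integral: "\<pi> k = (\<integral>\<omega>. of_bool (Z \<omega> = k) \<partial>M)"
proof -
  have "(\<integral>\<omega>. of_bool (Z \<omega> = k) \<partial>M) = (\<integral>\<omega>. indicator {\<omega>\<in>space M. Z \<omega> = k} \<omega> \<partial>M)"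
    by (intro Bochner_Integration.integral_cong) (auto simp: indicator_def)
  also have "\<dots> = measure M {\<omega>\<in>space M. Z \<omega> = k}"
    by (simp add: Int_absorb2 sets.sets_into_space)
  finally show ?thesis using pi_eq_prob by simp
qed

lemma pi_nonneg: "0 \<le> \<pi> k"
  using pi_eq_prob by simp

lemma sum_pi: "(\<Sum>k\<in>{0..K}. \<pi> k) = 1"
proof -
  have "(\<Sum>k\<in>{0..K}. \<pi> k) = (\<integral>\<omega>. (\<Sum>k\<in>{0..K}. of_bool (Z \<omega> = k)) \<partial>M)"
    unfolding pi_eq_integral
    by (rule Bochner_Integration.integral_sum[symmetric]) (auto intro!: integrable_ess_bounded)
  also have "\<dots> = 1" using sum_indicator_Z by (simp add: prob_space cong: Bochner_Integration.integral_cong)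
  finally show ?thesis .
qed

lemma AE_Z_neq_if_pi_eq_0: "\<pi> k = 0 \<Longrightarrow> AE \<omega> in M. Z \<omega> \<noteq> k"
  using pi_eq_prob by (intro AE_I'[of "{\<omega>\<in>space M. Z \<omega> = k}"]) (auto simp: null_sets_def emeasure_eq_measure)

lemma cond_exp_indicator_Z: "AE \<omega> in M. real_cond_exp M sigma_X (\<lambda>\<omega>. of_bool (Z \<omega> = k)) \<omega> = \<pi> k"
proof (rule sigma_X.real_cond_exp_charact)
  fix A assume A: "A \<in> sets sigma_X"
  obtain B where B: "B \<in> sets MX" "A = X -` B \<inter> space M"
    using A sets_vimage_algebra2[of X "space M" MX] measurable_space[OF X_measurable] by auto
  have AM: "A \<in> sets M" using A subalgebra_sigma_X unfolding subalgebra_def by auto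
  have "(\<integral>x\<in>A. of_bool (Z x = k) \<partial>M) = (\<integral>x. indicator ({\<omega>\<in>space M. Z \<omega> = k} \<inter> A) x \<partial>M)"
    unfolding set_lebesgue_integral_def by (intro Bochner_Integration.integral_cong) (auto simp: indicator_def)
  also have "\<dots> = \<pi> k * measure M A" using Z_X_indep B pi_eq_prob AM by simp
  also have "\<dots> = (\<integral>x\<in>A. \<pi> k \<partial>M)"
    unfolding set_lebesgue_integral_def using AM by (simp add: Int_absorb2 sets.sets_into_space)
  finally show "(\<integral>x\<in>A. of_bool (Z x = k) \<partial>M) = (\<integral>x\<in>A. \<pi> k \<partial>M)" .
qed (auto intro!: integrable_ess_bounded)

lemma integral_indicator_Z_mult:
  assumes "\<psi> \<in> borel_measurable sigma_X" "ess_bounded M \<psi>"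
  shows "(\<integral>\<omega>. of_bool (Z \<omega> = k) * \<psi> \<omega> \<partial>M) = \<pi> k * (\<integral>\<omega>. \<psi> \<omega> \<partial>M)"
proof -
  have "integrable M (\<lambda>\<omega>. \<psi> \<omega> * of_bool (Z \<omega> = k))"
    using assms(2) by (intro integrable_ess_bounded) auto
  from sigma_X.real_cond_exp_intg(2)[OF this assms(1)]
  have "(\<integral>\<omega>. of_bool (Z \<omega> = k) * \<psi> \<omega> \<partial>M)
      = (\<integral>\<omega>. \<psi> \<omega> * real_cond_exp M sigma_X (\<lambda>\<omega>. of_bool (Z \<omega> = k)) \<omega> \<partial>M)"
    by (simp add: mult.commute)
  also have "\<dots> = (\<integral>\<omega>. \<psi> \<omega> * \<pi> k \<partial>M)"
    using cond_exp_indicator_Z[of k] measurable_from_sigma_X[OF assms(1)]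
    by (intro integral_cong_AE) (auto elim!: AE_mp)
  finally show ?thesis by simp
qed

lemma integral_centered_indicators_mult:
  assumes "\<psi> \<in> borel_measurable sigma_X" "ess_bounded M \<psi>"
  shows "(\<integral>\<omega>. (of_bool (Z \<omega> = l) - \<pi> l) * (of_bool (Z \<omega> = k) - \<pi> k) * \<psi> \<omega> \<partial>M)
       = (of_bool (l = k) - \<pi> l) * \<pi> k * (\<integral>\<omega>. \<psi> \<omega> \<partial>M)"
proof -
  have int: "integrable M (\<lambda>\<omega>. of_bool (Z \<omega> = j) * \<psi> \<omega>)" "integrable M \<psi>" for j
    using assms(2) by (auto intro!: integrable_ess_bounded)
  have "(of_bool (Z \<omega> = l) - \<pi> l) * (of_bool (Z \<omega> = k) - \<pi> k) * \<psi> \<omega>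
      = of_bool (l = k) * (of_bool (Z \<omega> = k) * \<psi> \<omega>) - \<pi> k * (of_bool (Z \<omega> = l) * \<psi> \<omega>)
        - \<pi> l * (of_bool (Z \<omega> = k) * \<psi> \<omega>) + (\<pi> l * \<pi> k) * \<psi> \<omega>" for \<omega>
    by (cases "Z \<omega> = l"; cases "Z \<omega> = k"; cases "l = k") (auto simp: algebra_simps)
  then have "(\<integral>\<omega>. (of_bool (Z \<omega> = l) - \<pi> l) * (of_bool (Z \<omega> = k) - \<pi> k) * \<psi> \<omega> \<partial>M)
      = of_bool (l = k) * (\<integral>\<omega>. of_bool (Z \<omega> = k) * \<psi> \<omega> \<partial>M) - \<pi> k * (\<integral>\<omega>. of_bool (Z \<omega> = l) * \<psi> \<omega> \<partial>M)
        - \<pi> l * (\<integral>\<omega>. of_bool (Z \<omega> = k) * \<psi> \<omega> \<partial>M) + (\<pi> l * \<pi> k) * (\<integral>\<omega>. \<psi> \<omega> \<partial>M)"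
    using int by simp
  then show ?thesis
    unfolding integral_indicator_Z_mult[OF assms] by (simp add: algebra_simps)
qed

lemma real_cond_exp_abs_le:
  assumes "f \<in> borel_measurable M" "\<forall>\<omega>\<in>space M. \<bar>f \<omega>\<bar> \<le> B"
  shows "AE \<omega> in M. \<bar>real_cond_exp M sigma_X f \<omega>\<bar> \<le> B"
proof -
  have int: "integrable M f" using assms by (intro integrable_ess_bounded ess_boundedI[where B=B]) auto
  have const: "AE \<omega> in M. real_cond_exp M sigma_X (\<lambda>_. c) \<omega> = c" for c
    by (rule sigma_X.real_cond_exp_F_meas) auto
  have "AE \<omega> in M. real_cond_exp M sigma_X f \<omega> \<le> real_cond_exp M sigma_X (\<lambda>_. B) \<omega>"
    using assms int by (intro sigma_X.real_cond_exp_mono) (auto intro!: AE_I2 simp: abs_le_iff)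
  moreover have "AE \<omega> in M. real_cond_exp M sigma_X (\<lambda>_. -B) \<omega> \<le> real_cond_exp M sigma_X f \<omega>"
    using assms int by (intro sigma_X.real_cond_exp_mono) (auto intro!: AE_I2 simp: abs_le_iff)
  ultimately show ?thesis using const[of B] const[of "-B"] by eventually_elim auto
qed

lemma measurable_cexp_ZX: "cexp_ZX M X MX Z f l \<in> borel_measurable sigma_X"
  unfolding cexp_ZX_def by (intro borel_measurable_divide borel_measurable_cond_exp)

lemma cexp_ZX_AE_eq:
  "AE \<omega> in M. cexp_ZX M X MX Z f l \<omega> = real_cond_exp M sigma_X (\<lambda>w. f w * of_bool (Z w = l)) \<omega> / \<pi> l"
  using cond_exp_indicator_Z[of l] unfolding cexp_ZX_def by eventually_elim simp

lemma ess_bounded_cexp_ZX: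
  assumes "f \<in> borel_measurable M" "\<forall>\<omega>\<in>space M. \<bar>f \<omega>\<bar> \<le> B"
  shows "ess_bounded M (cexp_ZX M X MX Z f l)"
proof (rule ess_boundedI)
  show "cexp_ZX M X MX Z f l \<in> borel_measurable M"
    by (rule measurable_from_sigma_X[OF measurable_cexp_ZX])
  have "AE \<omega> in M. \<bar>real_cond_exp M sigma_X (\<lambda>w. f w * of_bool (Z w = l)) \<omega>\<bar> \<le> B"
    using assms by (intro real_cond_exp_abs_le) (auto simp: abs_mult)
  moreover note cexp_ZX_AE_eq[of f l]
  ultimately show "AE \<omega> in M. \<bar>cexp_ZX M X MX Z f l \<omega>\<bar> \<le> B / \<pi> l"
    by eventually_elim (use pi_nonneg[of l] in \<open>auto simp: abs_div intro: divide_right_mono\<close>)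
qed

lemma pi_mult_integral_cexp_ZX:
  assumes f: "f \<in> borel_measurable M" "\<forall>\<omega>\<in>space M. \<bar>f \<omega>\<bar> \<le> B"
    and \<phi>: "\<phi> \<in> borel_measurable sigma_X" "ess_bounded M \<phi>"
  shows "\<pi> l * (\<integral>\<omega>. cexp_ZX M X MX Z f l \<omega> * \<phi> \<omega> \<partial>M) = (\<integral>\<omega>. \<phi> \<omega> * (f \<omega> * of_bool (Z \<omega> = l)) \<partial>M)"
proof (cases "\<pi> l = 0")
  case True
  have "(\<integral>\<omega>. \<phi> \<omega> * (f \<omega> * of_bool (Z \<omega> = l)) \<partial>M) = 0"
    using AE_Z_neq_if_pi_eq_0[OF True] by (intro integral_eq_zero_AE) (auto elim!: AE_mp)
  with True show ?thesis by simp
next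
  case False
  define e where "e = real_cond_exp M sigma_X (\<lambda>w. f w * of_bool (Z w = l))"
  have "ess_bounded M f" using f by (intro ess_boundedI[where B=B]) auto
  then have "integrable M (\<lambda>\<omega>. \<phi> \<omega> * (f \<omega> * of_bool (Z \<omega> = l)))"
    by (intro integrable_ess_bounded ess_bounded_mult \<phi>(2) ess_bounded_indicator_Z)
  moreover have "(\<lambda>\<omega>. f \<omega> * of_bool (Z \<omega> = l)) \<in> borel_measurable M" using f(1) by measurable
  ultimately have "(\<integral>\<omega>. \<phi> \<omega> * (f \<omega> * of_bool (Z \<omega> = l)) \<partial>M) = (\<integral>\<omega>. \<phi> \<omega> * e \<omega> \<partial>M)"
    using sigma_X.real_cond_exp_intg(2)[OF _ \<phi>(1)] by (simp add: e_def)
  also have "\<dots> = (\<integral>\<omega>. \<pi> l * (cexp_ZX M X MX Z f l \<omega> * \<phi> \<omega>) \<partial>M)"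
  proof (rule integral_cong_AE)
    note [measurable] = measurable_from_sigma_X[OF \<phi>(1)] measurable_from_sigma_X[OF measurable_cexp_ZX]
      borel_measurable_cond_exp2[of M sigma_X]
    show "(\<lambda>\<omega>. \<phi> \<omega> * e \<omega>) \<in> borel_measurable M" unfolding e_def by measurable
    show "(\<lambda>\<omega>. \<pi> l * (cexp_ZX M X MX Z f l \<omega> * \<phi> \<omega>)) \<in> borel_measurable M" by measurable
    show "AE \<omega> in M. \<phi> \<omega> * e \<omega> = \<pi> l * (cexp_ZX M X MX Z f l \<omega> * \<phi> \<omega>)"
      using cexp_ZX_AE_eq[of f l] by eventually_elim (use False in \<open>simp add: e_def\<close>)
  qed
  finally show ?thesis by simp
qed

definition augmentation :: "('w \<Rightarrow> real) \<Rightarrow> 'w \<Rightarrow> real" where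
  "augmentation f \<omega> = (\<Sum>l\<in>{0..K}. (of_bool (Z \<omega> = l) - \<pi> l) * cexp_ZX M X MX Z f l \<omega>)"

lemma aug_term_nth: "aug_term M X MX Z K \<pi> u \<omega> $ i = augmentation (\<lambda>\<omega>. u \<omega> $ i) \<omega>"
  by (simp add: aug_term_def augmentation_def)

lemma ess_bounded_augmentation:
  "f \<in> borel_measurable M \<Longrightarrow> \<forall>\<omega>\<in>space M. \<bar>f \<omega>\<bar> \<le> B \<Longrightarrow> ess_bounded M (augmentation f)"
  unfolding augmentation_def by (intro ess_bounded_sum ess_bounded_mult ess_bounded_diff ess_bounded_cexp_ZX) auto

lemma integral_mult_centered_indicator:
  assumes "ess_bounded M f" "ess_bounded M \<phi>"
  shows "(\<integral>\<omega>. f \<omega> * ((of_bool (Z \<omega> = k) - \<pi> k) * \<phi> \<omega>) \<partial>M)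
       = (\<integral>\<omega>. \<phi> \<omega> * (f \<omega> * of_bool (Z \<omega> = k)) \<partial>M) - \<pi> k * (\<integral>\<omega>. \<phi> \<omega> * f \<omega> \<partial>M)"
proof -
  have "integrable M (\<lambda>\<omega>. \<phi> \<omega> * (f \<omega> * of_bool (Z \<omega> = k)))" "integrable M (\<lambda>\<omega>. \<phi> \<omega> * f \<omega>)"
    by (intro integrable_ess_bounded ess_bounded_mult assms ess_bounded_indicator_Z)+
  moreover have "(\<integral>\<omega>. f \<omega> * ((of_bool (Z \<omega> = k) - \<pi> k) * \<phi> \<omega>) \<partial>M)
      = (\<integral>\<omega>. \<phi> \<omega> * (f \<omega> * of_bool (Z \<omega> = k)) - \<pi> k * (\<phi> \<omega> * f \<omega>) \<partial>M)"
    by (intro Bochner_Integration.integral_cong) (simp_all add: algebra_simps)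
  ultimately show ?thesis by simp
qed

text \<open>The augmentation is the projection of \<open>f\<close> onto the span of the variables
  \<open>(1(Z = k) - \<pi>\<^sub>k) \<phi>(X)\<close>.\<close>

lemma integral_augmentation_mult_centered_indicator:
  assumes f: "f \<in> borel_measurable M" "\<forall>\<omega>\<in>space M. \<bar>f \<omega>\<bar> \<le> B"
    and \<phi>: "\<phi> \<in> borel_measurable sigma_X" "ess_bounded M \<phi>" and k: "k \<le> K"
  shows "(\<integral>\<omega>. augmentation f \<omega> * ((of_bool (Z \<omega> = k) - \<pi> k) * \<phi> \<omega>) \<partial>M)
       = (\<integral>\<omega>. \<phi> \<omega> * (f \<omega> * of_bool (Z \<omega> = k)) \<partial>M) - \<pi> k * (\<integral>\<omega>. \<phi> \<omega> * f \<omega> \<partial>M)"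
proof -
  define a where "a l = (\<integral>\<omega>. \<phi> \<omega> * (f \<omega> * of_bool (Z \<omega> = l)) \<partial>M)" for l
  have c: "ess_bounded M (cexp_ZX M X MX Z f l)" "ess_bounded M (\<lambda>\<omega>. cexp_ZX M X MX Z f l \<omega> * \<phi> \<omega>)"
    "(\<lambda>\<omega>. cexp_ZX M X MX Z f l \<omega> * \<phi> \<omega>) \<in> borel_measurable sigma_X" for l
    using ess_bounded_cexp_ZX[OF f] \<phi> measurable_cexp_ZX by auto
  have "augmentation f \<omega> * ((of_bool (Z \<omega> = k) - \<pi> k) * \<phi> \<omega>)
      = (\<Sum>l\<in>{0..K}. (of_bool (Z \<omega> = l) - \<pi> l) * (of_bool (Z \<omega> = k) - \<pi> k)
                       * (cexp_ZX M X MX Z f l \<omega> * \<phi> \<omega>))" for \<omega>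
    unfolding augmentation_def sum_distrib_right by (simp add: algebra_simps)
  then have "(\<integral>\<omega>. augmentation f \<omega> * ((of_bool (Z \<omega> = k) - \<pi> k) * \<phi> \<omega>) \<partial>M)
      = (\<Sum>l\<in>{0..K}. (\<integral>\<omega>. (of_bool (Z \<omega> = l) - \<pi> l) * (of_bool (Z \<omega> = k) - \<pi> k)
                            * (cexp_ZX M X MX Z f l \<omega> * \<phi> \<omega>) \<partial>M))"
    by (simp, intro Bochner_Integration.integral_sum integrable_ess_bounded ess_bounded_mult
        ess_bounded_diff ess_bounded_indicator_Z ess_bounded_const c(2))
  also have "\<dots> = (\<Sum>l\<in>{0..K}. (of_bool (l = k) - \<pi> k) * a l)"
    unfolding integral_centered_indicators_mult[OF c(3,2)] a_def
    by (intro sum.cong refl)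
       (simp add: pi_mult_integral_cexp_ZX[OF f \<phi>, symmetric] algebra_simps)
  also have "\<dots> = a k - \<pi> k * (\<Sum>l\<in>{0..K}. a l)"
    using k by (simp add: left_diff_distrib sum_subtractf sum_distrib_left sum_of_bool_mult)
  also have "(\<Sum>l\<in>{0..K}. a l) = (\<integral>\<omega>. (\<Sum>l\<in>{0..K}. \<phi> \<omega> * (f \<omega> * of_bool (Z \<omega> = l))) \<partial>M)"
    unfolding a_def using f
    by (intro Bochner_Integration.integral_sum[symmetric] integrable_ess_bounded ess_bounded_mult
        \<phi>(2) ess_boundedI[where B=B] ess_bounded_indicator_Z) auto
  also have "\<dots> = (\<integral>\<omega>. \<phi> \<omega> * f \<omega> \<partial>M)"
  proof (intro Bochner_Integration.integral_cong refl)
    fix \<omega> assume "\<omega> \<in> space M"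
    then have "\<phi> \<omega> * (f \<omega> * (\<Sum>l\<in>{0..K}. of_bool (Z \<omega> = l))) = \<phi> \<omega> * f \<omega>"
      by (simp only: sum_indicator_Z mult_1_right)
    then show "(\<Sum>l\<in>{0..K}. \<phi> \<omega> * (f \<omega> * of_bool (Z \<omega> = l))) = \<phi> \<omega> * f \<omega>"
      by (simp only: sum_distrib_left)
  qed
  finally show ?thesis unfolding a_def .
qed

lemma residual_orthogonal_centered_indicator:
  assumes f: "f \<in> borel_measurable M" "\<forall>\<omega>\<in>space M. \<bar>f \<omega>\<bar> \<le> B"
    and \<phi>: "\<phi> \<in> borel_measurable sigma_X" "ess_bounded M \<phi>" and k: "k \<le> K"
  shows "(\<integral>\<omega>. (f \<omega> - augmentation f \<omega>) * ((of_bool (Z \<omega> = k) - \<pi> k) * \<phi> \<omega>) \<partial>M) = 0"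
proof -
  have fb: "ess_bounded M f" using f by (intro ess_boundedI[where B=B]) auto
  have "ess_bounded M (\<lambda>\<omega>. g \<omega> * ((of_bool (Z \<omega> = k) - \<pi> k) * \<phi> \<omega>))" if "ess_bounded M g" for g
    by (intro ess_bounded_mult ess_bounded_diff ess_bounded_indicator_Z ess_bounded_const that \<phi>(2))
  then have int: "integrable M (\<lambda>\<omega>. f \<omega> * ((of_bool (Z \<omega> = k) - \<pi> k) * \<phi> \<omega>))"
    "integrable M (\<lambda>\<omega>. augmentation f \<omega> * ((of_bool (Z \<omega> = k) - \<pi> k) * \<phi> \<omega>))"
    using fb ess_bounded_augmentation[OF f] by (auto intro: integrable_ess_bounded)
  have "(\<integral>\<omega>. (f \<omega> - augmentation f \<omega>) * ((of_bool (Z \<omega> = k) - \<pi> k) * \<phi> \<omega>) \<partial>M)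
      = (\<integral>\<omega>. f \<omega> * ((of_bool (Z \<omega> = k) - \<pi> k) * \<phi> \<omega>)
            - augmentation f \<omega> * ((of_bool (Z \<omega> = k) - \<pi> k) * \<phi> \<omega>) \<partial>M)"
    by (simp only: left_diff_distrib[of "f _"])
  also have "\<dots> = 0"
    unfolding Bochner_Integration.integral_diff[OF int] integral_mult_centered_indicator[OF fb \<phi>(2)]
      integral_augmentation_mult_centered_indicator[OF f \<phi> k] by simp
  finally show ?thesis .
qed

lemma residual_orthogonal_augmentation:
  assumes f: "f \<in> borel_measurable M" "\<forall>\<omega>\<in>space M. \<bar>f \<omega>\<bar> \<le> B"
    and g: "g \<in> borel_measurable M" "\<forall>\<omega>\<in>space M. \<bar>g \<omega>\<bar> \<le> B'"
  shows "(\<integral>\<omega>. (f \<omega> - augmentation f \<omega>) * augmentation g \<omega> \<partial>M) = 0"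
proof -
  have "(\<integral>\<omega>. (f \<omega> - augmentation f \<omega>) * augmentation g \<omega> \<partial>M)
      = (\<Sum>l\<in>{0..K}. (\<integral>\<omega>. (f \<omega> - augmentation f \<omega>) * ((of_bool (Z \<omega> = l) - \<pi> l) * cexp_ZX M X MX Z g l \<omega>) \<partial>M))"
    unfolding augmentation_def[of g] sum_distrib_left using f
    by (intro Bochner_Integration.integral_sum integrable_ess_bounded ess_bounded_mult ess_bounded_diff
        ess_boundedI[where B=B] ess_bounded_augmentation[OF f] ess_bounded_cexp_ZX[OF g]
        ess_bounded_indicator_Z ess_bounded_const) auto
  also have "\<dots> = 0"
    by (intro sum.neutral ballI residual_orthogonal_centered_indicator[OF f measurable_cexp_ZX ess_bounded_cexp_ZX[OF g]]) auto
  finally show ?thesis .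
qed

lemma AE_abs_le_if_abs_le_on_Z:
  fixes f :: "'x \<Rightarrow> real"
  assumes f: "f \<in> borel_measurable MX" and pos: "0 < \<pi> l"
    and bound: "\<forall>\<omega>\<in>space M. Z \<omega> = l \<longrightarrow> \<bar>f (X \<omega>)\<bar> \<le> B"
  shows "AE \<omega> in M. \<bar>f (X \<omega>)\<bar> \<le> B"
proof -
  define C where "C = (\<lambda>x. \<bar>f x\<bar>) -` {B<..} \<inter> space MX"
  define A where "A = X -` C \<inter> space M"
  have C: "C \<in> sets MX"
    unfolding C_def by (intro measurable_sets[of _ MX borel] borel_measurable_abs f greaterThan_borel)
  then have A: "A \<in> sets M" unfolding A_def by (rule measurable_sets[OF X_measurable])
  have "{\<omega>\<in>space M. Z \<omega> = l} \<inter> A = {}"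
    using bound measurable_space[OF X_measurable] unfolding A_def C_def by fastforce
  moreover have "measure M ({\<omega>\<in>space M. Z \<omega> = l} \<inter> A) = \<pi> l * measure M A"
    unfolding A_def using Z_X_indep C by (simp add: pi_eq_prob)
  ultimately have "\<pi> l * measure M A = 0" by simp
  with pos have "A \<in> null_sets M" using A by (simp add: null_sets_def emeasure_eq_measure)
  then have "AE \<omega> in M. \<omega> \<notin> A" by (rule AE_not_in)
  then show ?thesis
    by (rule AE_mp) (auto intro!: AE_I2 simp: A_def C_def dest: measurable_space[OF X_measurable])
qed

text \<open>Centring the \<open>\<psi>\<^sub>l\<close> is what makes the combination equal to \<open>\<psi>\<^sub>Z(X)\<close>.\<close>

lemma centered_indicator_representation:
  fixes w :: "nat \<Rightarrow> real" and kk :: "nat \<Rightarrow> nat" and h :: "nat \<Rightarrow> 'x \<Rightarrow> real"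
  assumes kk: "\<forall>j<d. kk j \<le> K" and h: "\<forall>j. h j \<in> borel_measurable MX"
  obtains \<psi> :: "nat \<Rightarrow> 'x \<Rightarrow> real" where "\<forall>l. \<psi> l \<in> borel_measurable MX"
    "\<forall>\<omega>\<in>space M. (\<Sum>j<d. w j * ((of_bool (Z \<omega> = kk j) - \<pi> (kk j)) * h j (X \<omega>)))
        = (\<Sum>l\<in>{0..K}. (of_bool (Z \<omega> = l) - \<pi> l) * \<psi> l (X \<omega>))"
    "\<forall>\<omega>\<in>space M. (\<Sum>j<d. w j * ((of_bool (Z \<omega> = kk j) - \<pi> (kk j)) * h j (X \<omega>))) = \<psi> (Z \<omega>) (X \<omega>)"
proof
  define F where "F l x = (\<Sum>j<d. of_bool (kk j = l) * (w j * h j x))" for l x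
  define \<psi> where "\<psi> l x = F l x - (\<Sum>l'\<in>{0..K}. \<pi> l' * F l' x)" for l x
  note [measurable] = h[rule_format]
  show "\<forall>l. \<psi> l \<in> borel_measurable MX"
    unfolding \<psi>_def F_def by (intro allI) measurable
  have v_eq: "(\<Sum>j<d. w j * ((of_bool (Z \<omega> = kk j) - \<pi> (kk j)) * h j (X \<omega>)))
      = (\<Sum>l\<in>{0..K}. (of_bool (Z \<omega> = l) - \<pi> l) * F l (X \<omega>))" for \<omega>
  proof -
    have "(\<Sum>j<d. w j * ((of_bool (Z \<omega> = kk j) - \<pi> (kk j)) * h j (X \<omega>)))
        = (\<Sum>j<d. \<Sum>l\<in>{0..K}. of_bool (kk j = l) * ((of_bool (Z \<omega> = l) - \<pi> l) * (w j * h j (X \<omega>))))"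
    proof (intro sum.cong refl)
      fix j assume "j \<in> {..<d}"
      then have "kk j \<in> {0..K}" using kk by simp
      then show "w j * ((of_bool (Z \<omega> = kk j) - \<pi> (kk j)) * h j (X \<omega>))
          = (\<Sum>l\<in>{0..K}. of_bool (kk j = l) * ((of_bool (Z \<omega> = l) - \<pi> l) * (w j * h j (X \<omega>))))"
        by (simp only: sum_of_bool_mult(2)[OF finite_atLeastAtMost]) (simp add: algebra_simps)
    qed
    then show ?thesis
      unfolding F_def by (simp add: sum_distrib_left algebra_simps sum.swap[of _ "{0..K}"])
  qed
  have centered: "(\<Sum>l\<in>{0..K}. of_bool (Z \<omega> = l) - \<pi> l) = 0" if "\<omega> \<in> space M" for \<omega>
    using sum_indicator_Z[OF that] sum_pi by (simp add: sum_subtractf)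
  show "\<forall>\<omega>\<in>space M. (\<Sum>j<d. w j * ((of_bool (Z \<omega> = kk j) - \<pi> (kk j)) * h j (X \<omega>)))
        = (\<Sum>l\<in>{0..K}. (of_bool (Z \<omega> = l) - \<pi> l) * \<psi> l (X \<omega>))"
  proof
    fix \<omega> assume "\<omega> \<in> space M"
    have "(\<Sum>l\<in>{0..K}. (of_bool (Z \<omega> = l) - \<pi> l) * \<psi> l (X \<omega>))
        = (\<Sum>l\<in>{0..K}. (of_bool (Z \<omega> = l) - \<pi> l) * F l (X \<omega>))
          - (\<Sum>l\<in>{0..K}. of_bool (Z \<omega> = l) - \<pi> l) * (\<Sum>l'\<in>{0..K}. \<pi> l' * F l' (X \<omega>))"
      unfolding \<psi>_def by (simp add: right_diff_distrib left_diff_distrib sum_subtractf sum_distrib_right)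
    then show "(\<Sum>j<d. w j * ((of_bool (Z \<omega> = kk j) - \<pi> (kk j)) * h j (X \<omega>)))
        = (\<Sum>l\<in>{0..K}. (of_bool (Z \<omega> = l) - \<pi> l) * \<psi> l (X \<omega>))"
      using centered[OF \<open>\<omega> \<in> space M\<close>] v_eq by simp
  qed
  show "\<forall>\<omega>\<in>space M. (\<Sum>j<d. w j * ((of_bool (Z \<omega> = kk j) - \<pi> (kk j)) * h j (X \<omega>))) = \<psi> (Z \<omega>) (X \<omega>)"
  proof
    fix \<omega> assume "\<omega> \<in> space M"
    then have "Z \<omega> \<in> {0..K}" using Z_le by simp
    then have "(\<Sum>l\<in>{0..K}. of_bool (Z \<omega> = l) * F l (X \<omega>)) = F (Z \<omega>) (X \<omega>)"
      by (rule sum_of_bool_mult(2)[OF finite_atLeastAtMost])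
    then show "(\<Sum>j<d. w j * ((of_bool (Z \<omega> = kk j) - \<pi> (kk j)) * h j (X \<omega>))) = \<psi> (Z \<omega>) (X \<omega>)"
      unfolding v_eq by (simp only: \<psi>_def left_diff_distrib sum_subtractf)
  qed
qed

lemma residual_orthogonal_Vvec_comb:
  fixes w :: "nat \<Rightarrow> real" and kk :: "nat \<Rightarrow> nat" and h :: "nat \<Rightarrow> 'x \<Rightarrow> real"
  assumes f: "f \<in> borel_measurable M" "\<forall>\<omega>\<in>space M. \<bar>f \<omega>\<bar> \<le> B"
    and kk: "\<forall>j<d. kk j \<le> K" and h: "\<forall>j. h j \<in> borel_measurable MX"
    and v_bound: "\<forall>\<omega>\<in>space M. \<bar>\<Sum>j<d. w j * ((of_bool (Z \<omega> = kk j) - \<pi> (kk j)) * h j (X \<omega>))\<bar> \<le> B'"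
  shows "(\<integral>\<omega>. (f \<omega> - augmentation f \<omega>)
            * (\<Sum>j<d. w j * ((of_bool (Z \<omega> = kk j) - \<pi> (kk j)) * h j (X \<omega>))) \<partial>M) = 0"
proof -
  obtain \<psi> where \<psi>: "\<forall>l. \<psi> l \<in> borel_measurable MX"
    "\<forall>\<omega>\<in>space M. (\<Sum>j<d. w j * ((of_bool (Z \<omega> = kk j) - \<pi> (kk j)) * h j (X \<omega>)))
        = (\<Sum>l\<in>{0..K}. (of_bool (Z \<omega> = l) - \<pi> l) * \<psi> l (X \<omega>))"
    "\<forall>\<omega>\<in>space M. (\<Sum>j<d. w j * ((of_bool (Z \<omega> = kk j) - \<pi> (kk j)) * h j (X \<omega>))) = \<psi> (Z \<omega>) (X \<omega>)"
    using centered_indicator_representation[OF kk h] by blast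
  \<comment> \<open>\<open>\<psi>\<^sub>l(X)\<close> is only known to be bounded when \<open>\<pi>\<^sub>l > 0\<close>; otherwise its term vanishes a.e.\<close>
  define \<phi> where "\<phi> l \<omega> = (if 0 < \<pi> l then \<psi> l (X \<omega>) else 0)" for l \<omega>
  have \<phi>_meas: "\<phi> l \<in> borel_measurable sigma_X" for l
    unfolding \<phi>_def using measurable_compose_X[of "\<psi> l"] \<psi>(1) by simp
  have \<phi>_bounded: "ess_bounded M (\<phi> l)" for l
  proof (cases "0 < \<pi> l")
    case True
    have "\<forall>\<omega>\<in>space M. Z \<omega> = l \<longrightarrow> \<bar>\<psi> l (X \<omega>)\<bar> \<le> B'"
      using \<psi>(3) v_bound by metis
    then have "AE \<omega> in M. \<bar>\<phi> l \<omega>\<bar> \<le> B'"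
      using AE_abs_le_if_abs_le_on_Z[OF \<psi>(1)[rule_format] True] True by (simp add: \<phi>_def)
    then show ?thesis by (rule ess_boundedI[OF measurable_from_sigma_X[OF \<phi>_meas]])
  next
    case False
    then have "\<phi> l = (\<lambda>_. 0)" by (simp add: \<phi>_def fun_eq_iff)
    then show ?thesis by (simp add: ess_bounded_const)
  qed
  have "AE \<omega> in M. \<forall>l\<in>{0..K}. (of_bool (Z \<omega> = l) - \<pi> l) * \<psi> l (X \<omega>) = (of_bool (Z \<omega> = l) - \<pi> l) * \<phi> l \<omega>"
  proof (rule AE_finite_allI)
    show "AE \<omega> in M. (of_bool (Z \<omega> = l) - \<pi> l) * \<psi> l (X \<omega>) = (of_bool (Z \<omega> = l) - \<pi> l) * \<phi> l \<omega>" for l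
    proof (cases "0 < \<pi> l")
      case False
      then have "\<pi> l = 0" using pi_nonneg[of l] by simp
      from AE_Z_neq_if_pi_eq_0[OF this] show ?thesis
        by (rule AE_mp) (use \<open>\<pi> l = 0\<close> in \<open>auto intro!: AE_I2 simp: \<phi>_def\<close>)
    qed (simp add: \<phi>_def)
  qed simp
  then have AE_eq: "AE \<omega> in M. (f \<omega> - augmentation f \<omega>)
            * (\<Sum>j<d. w j * ((of_bool (Z \<omega> = kk j) - \<pi> (kk j)) * h j (X \<omega>)))
      = (\<Sum>l\<in>{0..K}. (f \<omega> - augmentation f \<omega>) * ((of_bool (Z \<omega> = l) - \<pi> l) * \<phi> l \<omega>))"
  proof (rule AE_mp, intro AE_I2 impI)
    fix \<omega> assume "\<omega> \<in> space M"
      and eq: "\<forall>l\<in>{0..K}. (of_bool (Z \<omega> = l) - \<pi> l) * \<psi> l (X \<omega>) = (of_bool (Z \<omega> = l) - \<pi> l) * \<phi> l \<omega>"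
    then show "(f \<omega> - augmentation f \<omega>)
            * (\<Sum>j<d. w j * ((of_bool (Z \<omega> = kk j) - \<pi> (kk j)) * h j (X \<omega>)))
      = (\<Sum>l\<in>{0..K}. (f \<omega> - augmentation f \<omega>) * ((of_bool (Z \<omega> = l) - \<pi> l) * \<phi> l \<omega>))"
    proof -
      have "(\<Sum>l\<in>{0..K}. (of_bool (Z \<omega> = l) - \<pi> l) * \<psi> l (X \<omega>))
          = (\<Sum>l\<in>{0..K}. (of_bool (Z \<omega> = l) - \<pi> l) * \<phi> l \<omega>)"
        by (intro sum.cong refl) (use eq in blast)
      with \<psi>(2) \<open>\<omega> \<in> space M\<close> show ?thesis by (simp add: sum_distrib_left)
    qed
  qed
  have "(\<integral>\<omega>. (f \<omega> - augmentation f \<omega>)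
            * (\<Sum>j<d. w j * ((of_bool (Z \<omega> = kk j) - \<pi> (kk j)) * h j (X \<omega>))) \<partial>M)
      = (\<integral>\<omega>. (\<Sum>l\<in>{0..K}. (f \<omega> - augmentation f \<omega>) * ((of_bool (Z \<omega> = l) - \<pi> l) * \<phi> l \<omega>)) \<partial>M)"
  proof (rule integral_cong_AE)
    note [measurable] = f(1) ess_bounded_measurable[OF ess_bounded_augmentation[OF f]]
      measurable_from_sigma_X[OF \<phi>_meas] h[rule_format] X_measurable
    show "(\<lambda>\<omega>. (f \<omega> - augmentation f \<omega>)
            * (\<Sum>j<d. w j * ((of_bool (Z \<omega> = kk j) - \<pi> (kk j)) * h j (X \<omega>)))) \<in> borel_measurable M"
      by measurable
    show "(\<lambda>\<omega>. \<Sum>l\<in>{0..K}. (f \<omega> - augmentation f \<omega>) * ((of_bool (Z \<omega> = l) - \<pi> l) * \<phi> l \<omega>))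
        \<in> borel_measurable M"
      by measurable
  qed (fact AE_eq)
  also have "\<dots> = (\<Sum>l\<in>{0..K}. (\<integral>\<omega>. (f \<omega> - augmentation f \<omega>) * ((of_bool (Z \<omega> = l) - \<pi> l) * \<phi> l \<omega>) \<partial>M))"
    using f by (intro Bochner_Integration.integral_sum integrable_ess_bounded ess_bounded_mult ess_bounded_diff
        ess_boundedI[where B=B] ess_bounded_augmentation[OF f] \<phi>_bounded ess_bounded_indicator_Z
        ess_bounded_const) auto
  also have "\<dots> = 0"
    by (intro sum.neutral ballI residual_orthogonal_centered_indicator[OF f \<phi>_meas \<phi>_bounded]) auto
  finally show ?thesis .
qed

lemma inverse_second_moment_row_bound:
  fixes u :: "'w \<Rightarrow> real^'q::finite" and W A :: "real mat" and d :: nat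
    and kk :: "nat \<Rightarrow> nat" and h :: "nat \<Rightarrow> 'x \<Rightarrow> real"
  defines "G \<equiv> \<lambda>\<omega>. tovec (u \<omega>) @\<^sub>v (W *\<^sub>v Vvec d Z X \<pi> kk h \<omega>)"
    and "Sig \<equiv> smom M CARD('q) (\<lambda>\<omega>. tovec (u \<omega> - aug_term M X MX Z K \<pi> u \<omega>))"
  assumes u: "\<forall>i. (\<lambda>\<omega>. u \<omega> $ i) \<in> borel_measurable M"
    and kk: "\<forall>j<d. kk j \<le> K" and h: "\<forall>j. h j \<in> borel_measurable MX"
    and W: "W \<in> carrier_mat d d" and A: "A \<in> carrier_mat CARD('q) d"
    and bound: "\<forall>\<omega>\<in>space M. \<forall>a<CARD('q) + d. \<bar>vec_index (G \<omega>) a\<bar> \<le> B"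
    and det: "det (smom M (CARD('q) + d) G) \<noteq> 0"
    and ij: "i < CARD('q)" "j < CARD('q)"
  shows "0 \<le> minv (smom M (CARD('q) + d) G) $$ (i,i)"
    and "((\<Sum>k<CARD('q). minv (smom M (CARD('q) + d) G) $$ (i,k) * Sig $$ (k,j)) - of_bool (i = j))\<^sup>2
       \<le> minv (smom M (CARD('q) + d) G) $$ (i,i) * (LINT \<omega>|M. (let e = A *\<^sub>v (W *\<^sub>v Vvec d Z X \<pi> kk h \<omega>) - tovec (aug_term M X MX Z K \<pi> u \<omega>)
                                in e \<bullet> e))"
proof -
  let ?q = "CARD('q)"
  define P where "P = minv (smom M (?q + d) G)"
  define v where "v b \<omega> = (\<Sum>k<d. W $$ (b,k) * ((of_bool (Z \<omega> = kk k) - \<pi> (kk k)) * h k (X \<omega>)))" for b \<omega>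
  define g where "g a \<omega> = vec_index (G \<omega>) a" for a \<omega>
  define f where "f a = (\<lambda>\<omega>. u \<omega> $ qidx a)" for a
  define S where "S a = augmentation (f a)" for a
  have g_u: "g a = f a" if "a < ?q" for a
    using that W by (simp add: fun_eq_iff g_def f_def G_def index_tovec_append)
  have g_v: "g (?q + b) = v b" if "b < d" for b
    using that W unfolding fun_eq_iff g_def v_def G_def
    by (simp add: index_tovec_append del: index_mult_mat_vec) (intro allI index_mult_mat_Vvec[OF W that])
  have f: "f a \<in> borel_measurable M" "\<forall>\<omega>\<in>space M. \<bar>f a \<omega>\<bar> \<le> B" if "a < ?q" for a
  proof -
    show "f a \<in> borel_measurable M" using u unfolding f_def by blast
    have "a < ?q + d" using that by simp
    then show "\<forall>\<omega>\<in>space M. \<bar>f a \<omega>\<bar> \<le> B"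
      using bound unfolding g_def[symmetric] g_u[OF that, symmetric] by blast
  qed
  have v: "v b \<in> borel_measurable M" "\<forall>\<omega>\<in>space M. \<bar>v b \<omega>\<bar> \<le> B" if "b < d" for b
  proof -
    note [measurable] = h[rule_format] X_measurable
    show "v b \<in> borel_measurable M" unfolding v_def by measurable
    show "\<forall>\<omega>\<in>space M. \<bar>v b \<omega>\<bar> \<le> B"
      using bound g_v[OF that] that unfolding g_def[symmetric] by (metis add_less_cancel_left)
  qed
  have g_bounded: "\<forall>a<?q + d. ess_bounded M (g a)"
  proof (intro allI impI)
    fix a assume "a < ?q + d"
    then consider "a < ?q" | b where "b < d" "a = ?q + b" by (metis add_diff_inverse_nat add_less_cancel_left)
    then show "ess_bounded M (g a)"
    proof cases
      case 1
      then show ?thesis using f[OF 1] by (auto simp: g_u intro!: ess_boundedI[where B=B])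
    next
      case (2 b)
      then show ?thesis using v[OF 2(1)] by (auto simp: g_v intro!: ess_boundedI[where B=B])
    qed
  qed
  have S_bounded: "\<forall>a<?q. ess_bounded M (S a)"
    unfolding S_def using f by (blast intro: ess_bounded_augmentation)
  have gram: "\<forall>b<?q + d. (\<Sum>k<?q + d. P $$ (i,k) * (\<integral>\<omega>. g k \<omega> * g b \<omega> \<partial>M)) = of_bool (i = b)"
    using sum_minv_mult(1)[OF smom_carrier det] ij by (simp add: P_def g_def index_smom)
  have orth_g: "\<forall>j<?q. \<forall>b<d. (\<integral>\<omega>. (g j \<omega> - S j \<omega>) * g (?q + b) \<omega> \<partial>M) = 0"
  proof (intro allI impI)
    fix j b assume j: "j < ?q" and b: "b < d"
    show "(\<integral>\<omega>. (g j \<omega> - S j \<omega>) * g (?q + b) \<omega> \<partial>M) = 0"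
      unfolding g_u[OF j] g_v[OF b] S_def v_def
      by (rule residual_orthogonal_Vvec_comb[OF f[OF j] kk h v(2)[OF b, unfolded v_def]])
  qed
  have orth_S: "\<forall>j<?q. \<forall>k<?q. (\<integral>\<omega>. (g j \<omega> - S j \<omega>) * S k \<omega> \<partial>M) = 0"
    unfolding S_def using f by (auto simp: g_u intro!: residual_orthogonal_augmentation)
  have Sig: "Sig $$ (k,j) = (\<integral>\<omega>. (g k \<omega> - S k \<omega>) * (g j \<omega> - S j \<omega>) \<partial>M)" if "k < ?q" for k
    using that ij by (simp add: Sig_def index_smom index_tovec g_u f_def S_def aug_term_nth)
  have e: "(let e = A *\<^sub>v (W *\<^sub>v Vvec d Z X \<pi> kk h \<omega>) - tovec (aug_term M X MX Z K \<pi> u \<omega>) in e \<bullet> e)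
      = (\<Sum>j'<?q. ((\<Sum>b<d. A $$ (j',b) * g (?q + b) \<omega>) - S j' \<omega>)\<^sup>2)" for \<omega>
  proof -
    have x: "W *\<^sub>v Vvec d Z X \<pi> kk h \<omega> \<in> carrier_vec d" using W by (simp add: Vvec_def)
    have idx: "vec_index (W *\<^sub>v Vvec d Z X \<pi> kk h \<omega>) b = g (?q + b) \<omega>" if "b < d" for b
      using g_v[OF that] index_mult_mat_Vvec[OF W that] by (simp add: v_def del: index_mult_mat_vec)
    have "(\<Sum>b<d. A $$ (j',b) * vec_index (W *\<^sub>v Vvec d Z X \<pi> kk h \<omega>) b)
        = (\<Sum>b<d. A $$ (j',b) * g (?q + b) \<omega>)" for j'
      by (intro sum.cong refl) (simp add: idx)
    then show ?thesis
      unfolding Let_def scalar_prod_self_mult_mat_vec_minus_tovec[OF A x]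
      by (simp add: S_def f_def aug_term_nth)
  qed
  show "0 \<le> P $$ (i,i)"
    by (rule prob_space.gram_inverse_residual_bound(1)[OF prob_space_axioms g_bounded S_bounded gram
          orth_g orth_S ij])
  show "((\<Sum>k<?q. P $$ (i,k) * Sig $$ (k,j)) - of_bool (i = j))\<^sup>2 \<le> P $$ (i,i) * (LINT \<omega>|M. (let e = A *\<^sub>v (W *\<^sub>v Vvec d Z X \<pi> kk h \<omega>) - tovec (aug_term M X MX Z K \<pi> u \<omega>) in e \<bullet> e))"
    unfolding e using prob_space.gram_inverse_residual_bound(2)[OF prob_space_axioms g_bounded S_bounded gram
          orth_g orth_S ij, of "\<lambda>j' b. A $$ (j',b)"]
    by (simp add: Sig)
qed

lemma inverse_second_moment_block_tendsto:
  fixes u :: "'w \<Rightarrow> real^'q::finite" and W A :: "nat \<Rightarrow> real mat" and d :: "nat \<Rightarrow> nat"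
    and kk :: "nat \<Rightarrow> nat \<Rightarrow> nat" and h :: "nat \<Rightarrow> nat \<Rightarrow> 'x \<Rightarrow> real"
  defines "G \<equiv> \<lambda>n \<omega>. tovec (u \<omega>) @\<^sub>v (W n *\<^sub>v Vvec (d n) Z X \<pi> (kk n) (h n) \<omega>)"
    and "Sig \<equiv> smom M CARD('q) (\<lambda>\<omega>. tovec (u \<omega> - aug_term M X MX Z K \<pi> u \<omega>))"
  assumes u: "\<forall>i. (\<lambda>\<omega>. u \<omega> $ i) \<in> borel_measurable M"
    and kk: "\<forall>n j. j < d n \<longrightarrow> kk n j \<le> K" and h: "\<forall>n j. h n j \<in> borel_measurable MX"
    and W: "\<forall>n. W n \<in> carrier_mat (d n) (d n)" and A: "\<forall>n. A n \<in> carrier_mat CARD('q) (d n)"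
    and bound: "\<forall>n. \<forall>\<omega>\<in>space M. \<forall>a<CARD('q) + d n. \<bar>vec_index (G n \<omega>) a\<bar> \<le> B"
    and det: "\<forall>n. det (smom M (CARD('q) + d n) (G n)) \<noteq> 0" and det_Sig: "det Sig \<noteq> 0"
    and approx: "(\<lambda>n. LINT \<omega>|M. (let e = A n *\<^sub>v (W n *\<^sub>v Vvec (d n) Z X \<pi> (kk n) (h n) \<omega>)
                                     - tovec (aug_term M X MX Z K \<pi> u \<omega>) in e \<bullet> e)) \<longlonglongrightarrow> 0"
    and ij: "i < CARD('q)" "j < CARD('q)"
  shows "(\<lambda>n. minv (smom M (CARD('q) + d n) (G n)) $$ (i,j)) \<longlonglongrightarrow> minv Sig $$ (i,j)"
proof (rule tendsto_inverse_if_residual_bound[OF approx _ _ _ _ ij])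
  have row_bound: "0 \<le> minv (smom M (CARD('q) + d n) (G n)) $$ (a,a)"
    "((\<Sum>k<CARD('q). minv (smom M (CARD('q) + d n) (G n)) $$ (a,k) * Sig $$ (k,b)) - of_bool (a = b))\<^sup>2
      \<le> minv (smom M (CARD('q) + d n) (G n)) $$ (a,a)
         * (LINT \<omega>|M. (let e = A n *\<^sub>v (W n *\<^sub>v Vvec (d n) Z X \<pi> (kk n) (h n) \<omega>)
                              - tovec (aug_term M X MX Z K \<pi> u \<omega>) in e \<bullet> e))"
    if "a < CARD('q)" "b < CARD('q)" for n a b
    using inverse_second_moment_row_bound[where u=u and d="d n" and kk="kk n" and h="h n" and W="W n"
        and A="A n" and B=B and i=a and j=b] u kk h W A bound det that
    unfolding G_def Sig_def by auto
  show "\<forall>n. 0 \<le> (LINT \<omega>|M. (let e = A n *\<^sub>v (W n *\<^sub>v Vvec (d n) Z X \<pi> (kk n) (h n) \<omega>)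
                                   - tovec (aug_term M X MX Z K \<pi> u \<omega>) in e \<bullet> e))"
    by (simp add: Let_def integral_nonneg scalar_prod_self_nonneg)
  show "\<forall>n a. a < CARD('q) \<longrightarrow> 0 \<le> minv (smom M (CARD('q) + d n) (G n)) $$ (a,a)"
    using row_bound(1) by blast
  show "\<forall>n a b. a < CARD('q) \<longrightarrow> b < CARD('q) \<longrightarrow>
      ((\<Sum>k<CARD('q). minv (smom M (CARD('q) + d n) (G n)) $$ (a,k) * Sig $$ (k,b)) - of_bool (a = b))\<^sup>2
      \<le> minv (smom M (CARD('q) + d n) (G n)) $$ (a,a)
         * (LINT \<omega>|M. (let e = A n *\<^sub>v (W n *\<^sub>v Vvec (d n) Z X \<pi> (kk n) (h n) \<omega>)
                              - tovec (aug_term M X MX Z K \<pi> u \<omega>) in e \<bullet> e))"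
    using row_bound(2) by blast
  show "\<forall>a b. a < CARD('q) \<longrightarrow> b < CARD('q) \<longrightarrow>
      (\<Sum>k<CARD('q). Sig $$ (a,k) * minv Sig $$ (k,b)) = of_bool (a = b)"
    using sum_minv_mult(2)[OF smom_carrier det_Sig[unfolded Sig_def]] by (simp add: Sig_def)
qed

end


section \<open>The Jacobians\<close>

lemma jac_exp_gvec:
  fixes m :: "real^'q::finite \<Rightarrow> 'y \<Rightarrow> nat \<Rightarrow> real^'q" and W :: "real mat"
  assumes W: "W \<in> carrier_mat d d" and a: "a < CARD('q) + d" and j: "j < CARD('q)"
  shows "jac_exp M (CARD('q) + d) (gvec m Y Z W V) \<beta>0 $$ (a,j)
       = (if a < CARD('q) then jac_exp M CARD('q) (\<lambda>\<beta> \<omega>. tovec (m \<beta> (Y \<omega>) (Z \<omega>))) \<beta>0 $$ (a,j) else 0)"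
proof -
  have "vec_index (gvec m Y Z W V \<beta> \<omega>) a
      = (if a < CARD('q) then vec_index (tovec (m \<beta> (Y \<omega>) (Z \<omega>))) a else vec_index (W *\<^sub>v V \<omega>) (a - CARD('q)))"
    for \<beta> \<omega>
    using W a by (simp add: gvec_def index_tovec_append index_tovec)
  then show ?thesis using a j by (simp add: jac_exp_def)
qed

lemma fro_norm_tendsto_zero:
  assumes "\<forall>n. F n \<in> carrier_mat k l"
    and "\<forall>i j. i < k \<longrightarrow> j < l \<longrightarrow> (\<lambda>n. F n $$ (i,j)) \<longlonglongrightarrow> 0"
  shows "(\<lambda>n. fro_norm (F n)) \<longlonglongrightarrow> 0"
proof -
  have "(\<lambda>n. sqrt (\<Sum>i<k. \<Sum>j<l. (F n $$ (i,j))\<^sup>2)) \<longlonglongrightarrow> sqrt (\<Sum>i<k. \<Sum>j<l. 0\<^sup>2)"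
    using assms(2) by (intro tendsto_intros) auto
  moreover have "dim_row (F n) = k" "dim_col (F n) = l" for n using assms(1) by auto
  ultimately show ?thesis by (simp add: fro_norm_def)
qed

lemma index_transpose_mult_mult:
  fixes D P :: "real mat"
  assumes "D \<in> carrier_mat N p" "P \<in> carrier_mat N N" "i < p" "j < p"
  shows "(transpose_mat D * P * D) $$ (i,j) = (\<Sum>b<N. (\<Sum>a<N. D $$ (a,i) * P $$ (a,b)) * D $$ (b,j))"
proof -
  have DP: "transpose_mat D * P \<in> carrier_mat p N" using assms by auto
  have "(transpose_mat D * P * D) $$ (i,j) = (\<Sum>b<N. (transpose_mat D * P) $$ (i,b) * D $$ (b,j))"
    by (rule index_mult_mat_sum[OF DP assms(1,3,4)])
  also have "\<dots> = (\<Sum>b<N. (\<Sum>a<N. D $$ (a,i) * P $$ (a,b)) * D $$ (b,j))"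
  proof (intro sum.cong refl)
    fix b assume "b \<in> {..<N}"
    then show "(transpose_mat D * P) $$ (i,b) * D $$ (b,j) = (\<Sum>a<N. D $$ (a,i) * P $$ (a,b)) * D $$ (b,j)"
      using assms by (subst index_mult_mat_sum[of _ p N _ N]) auto
  qed
  finally show ?thesis .
qed

lemma fro_norm_congruence_tendsto:
  fixes D :: "nat \<Rightarrow> real mat" and P :: "nat \<Rightarrow> real mat" and D0 T :: "real mat"
  assumes D0: "D0 \<in> carrier_mat q p" and T: "T \<in> carrier_mat q q"
    and D: "\<forall>n. D n \<in> carrier_mat (q + d n) p" and P: "\<forall>n. P n \<in> carrier_mat (q + d n) (q + d n)"
    and D_rows: "\<forall>n a j. a < q + d n \<longrightarrow> j < p \<longrightarrow> D n $$ (a,j) = (if a < q then D0 $$ (a,j) else 0)"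
    and P_lim: "\<forall>a b. a < q \<longrightarrow> b < q \<longrightarrow> (\<lambda>n. P n $$ (a,b)) \<longlonglongrightarrow> T $$ (a,b)"
  shows "(\<lambda>n. fro_norm (transpose_mat (D n) * P n * D n - transpose_mat D0 * T * D0)) \<longlonglongrightarrow> 0"
proof (rule fro_norm_tendsto_zero)
  show "\<forall>n. transpose_mat (D n) * P n * D n - transpose_mat D0 * T * D0 \<in> carrier_mat p p"
    using D0 T D P by auto
  define ent where "ent F i j = (\<Sum>b<q. (\<Sum>a<q. D0 $$ (a,i) * F a b) * D0 $$ (b,j))"
    for F :: "nat \<Rightarrow> nat \<Rightarrow> real" and i j
  have entry: "(transpose_mat (D n) * P n * D n - transpose_mat D0 * T * D0) $$ (i,j)
      = ent (\<lambda>a b. P n $$ (a,b)) i j - ent (\<lambda>a b. T $$ (a,b)) i j" if "i < p" "j < p" for n i j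
  proof -
    have low: "D n $$ (a,k) = D0 $$ (a,k)" if "a < q" "k < p" for a k
      using D_rows that by simp
    have high: "D n $$ (q + b,k) = 0" if "b < d n" "k < p" for b k
      using D_rows that by simp
    have inner: "(\<Sum>a<q + d n. D n $$ (a,i) * P n $$ (a,b)) = (\<Sum>a<q. D0 $$ (a,i) * P n $$ (a,b))" for b
      unfolding sum_lessThan_add using \<open>i < p\<close> by (simp add: high low)
    have "(transpose_mat (D n) * P n * D n) $$ (i,j) = ent (\<lambda>a b. P n $$ (a,b)) i j"
      unfolding index_transpose_mult_mult[OF D[rule_format] P[rule_format] that] inner
      unfolding sum_lessThan_add
      using \<open>j < p\<close> by (simp add: high low ent_def)
    moreover have "(transpose_mat D0 * T * D0) $$ (i,j) = ent (\<lambda>a b. T $$ (a,b)) i j"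
      unfolding index_transpose_mult_mult[OF D0 T that] ent_def ..
    ultimately show ?thesis using that D0 T D P by simp
  qed
  show "\<forall>i j. i < p \<longrightarrow> j < p \<longrightarrow>
      (\<lambda>n. (transpose_mat (D n) * P n * D n - transpose_mat D0 * T * D0) $$ (i,j)) \<longlonglongrightarrow> 0"
  proof (intro allI impI)
    fix i j assume ij: "i < p" "j < p"
    have "(\<lambda>n. ent (\<lambda>a b. P n $$ (a,b)) i j) \<longlonglongrightarrow> ent (\<lambda>a b. T $$ (a,b)) i j"
      unfolding ent_def using P_lim by (intro tendsto_intros) auto
    then show "(\<lambda>n. (transpose_mat (D n) * P n * D n - transpose_mat D0 * T * D0) $$ (i,j)) \<longlonglongrightarrow> 0"
      unfolding entry[OF ij] by (rule LIM_zero)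
  qed
qed


theorem lemma4:
  fixes M :: "'w measure" and MX :: "'x measure"
    and Y :: "'w \<Rightarrow> 'y" and Z :: "'w \<Rightarrow> nat" and X :: "'w \<Rightarrow> 'x"
    and K :: nat and \<pi> :: "nat \<Rightarrow> real"
    and m :: "real^'q::finite \<Rightarrow> 'y \<Rightarrow> nat \<Rightarrow> real^'q" and \<beta>0 :: "real^'q"
    and dm :: "real^'q \<Rightarrow> 'y \<Rightarrow> nat \<Rightarrow> real^'q^'q"
    and d2m :: "real^'q \<Rightarrow> 'y \<Rightarrow> nat \<Rightarrow> real^'q^'q^'q"
    and r :: "nat \<Rightarrow> nat" and kk :: "nat \<Rightarrow> nat \<Rightarrow> nat" and h :: "nat \<Rightarrow> nat \<Rightarrow> 'x \<Rightarrow> real"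
    and W :: "nat \<Rightarrow> real mat" and A :: "nat \<Rightarrow> real mat" and Mb :: real
  defines "q \<equiv> CARD('q)"
    and "V \<equiv> (\<lambda>n. Vvec (r n - CARD('q)) Z X \<pi> (kk n) (h n))"
    and "g \<equiv> (\<lambda>n. gvec m Y Z (W n) (Vvec (r n - CARD('q)) Z X \<pi> (kk n) (h n)))"
    and "mZ \<equiv> (\<lambda>\<omega>. m \<beta>0 (Y \<omega>) (Z \<omega>))"
    and "S \<equiv> aug_term M X MX Z K \<pi> (\<lambda>\<omega>. m \<beta>0 (Y \<omega>) (Z \<omega>))"
  assumes P: "prob_space M"
    and Z_meas: "Z \<in> measurable M (count_space UNIV)"
    and X_meas: "X \<in> measurable M MX"
    and Z_range: "\<forall>\<omega>\<in>space M. Z \<omega> \<le> K"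
    and pi_def: "\<forall>k. \<pi> k = measure M {\<omega> \<in> space M. Z \<omega> = k}"
    and indep: "\<forall>k. \<forall>B\<in>sets MX. measure M ({\<omega>\<in>space M. Z \<omega> = k} \<inter> (X -` B \<inter> space M))
              = measure M {\<omega>\<in>space M. Z \<omega> = k} * measure M (X -` B \<inter> space M)"
    and m_meas: "\<forall>\<beta> i. (\<lambda>\<omega>. m \<beta> (Y \<omega>) (Z \<omega>) $ i) \<in> borel_measurable M"
    and m_mean0: "\<forall>i. (LINT \<omega>|M. m \<beta>0 (Y \<omega>) (Z \<omega>) $ i) = 0"
    and dm_meas: "\<forall>i j. (\<lambda>\<omega>. dm \<beta>0 (Y \<omega>) (Z \<omega>) $ i $ j) \<in> borel_measurable M"
    and reg: "\<exists>\<delta>>0. \<exists>G :: 'y \<Rightarrow> nat \<Rightarrow> real. integrable M (\<lambda>\<omega>. G (Y \<omega>) (Z \<omega>)) \<and>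
       (\<forall>\<omega>\<in>space M.
          continuous_on (ball \<beta>0 \<delta>) (\<lambda>b. dm b (Y \<omega>) (Z \<omega>)) \<and>
          continuous_on (ball \<beta>0 \<delta>) (\<lambda>b. d2m b (Y \<omega>) (Z \<omega>)) \<and>
          (\<forall>b\<in>ball \<beta>0 \<delta>.
             ((\<lambda>c. m c (Y \<omega>) (Z \<omega>)) has_derivative (\<lambda>u. dm b (Y \<omega>) (Z \<omega>) *v u)) (at b) \<and>
             ((\<lambda>c. dm c (Y \<omega>) (Z \<omega>)) has_derivative
                (\<lambda>u. \<chi> i j. \<Sum>l\<in>UNIV. d2m b (Y \<omega>) (Z \<omega>) $ i $ j $ l * u $ l)) (at b) \<and>
             norm (dm b (Y \<omega>) (Z \<omega>)) \<le> G (Y \<omega>) (Z \<omega>) \<and>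
             norm (d2m b (Y \<omega>) (Z \<omega>)) \<le> G (Y \<omega>) (Z \<omega>)))"
    and Dm_rank: "vec_space.rank q (jac_exp M q (\<lambda>\<beta> \<omega>. tovec (m \<beta> (Y \<omega>) (Z \<omega>))) \<beta>0) = q"
    and r_gt: "\<forall>n. r n > q"
    and kk_range: "\<forall>n j. j < r n - q \<longrightarrow> kk n j \<le> K"
    and h_meas: "\<forall>n j. h n j \<in> borel_measurable MX"
    and W_dim: "\<forall>n. W n \<in> carrier_mat (r n - q) (r n - q)"
    and C1i: "Mb > 0 \<and>
       (\<forall>n \<beta>. \<forall>\<omega>\<in>space M. \<forall>a<r n. \<bar>vec_index (g n \<beta> \<omega>) a\<bar> \<le> Mb)"
    and C1ii: "\<exists>c C. 0 < c \<and>
       (\<forall>n e. eigenvalue (smom M (r n) (g n \<beta>0)) e \<longrightarrow> c \<le> e \<and> e \<le> C)"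
    and A_dim: "\<forall>n. A n \<in> carrier_mat q (r n - q)"
    and C1iii: "(\<lambda>n. LINT \<omega>|M. (let d = A n *\<^sub>v (W n *\<^sub>v V n \<omega>) - tovec (S \<omega>) in d \<bullet> d))
                  \<longlonglongrightarrow> 0"
    and C2: "(\<lambda>n. real (r n) ^ 3 / real n) \<longlonglongrightarrow> 0"
    and C3: "\<forall>v \<in> carrier_vec q. v \<noteq> 0\<^sub>v q \<longrightarrow>
       v \<bullet> (smom M q (\<lambda>\<omega>. tovec (mZ \<omega> - S \<omega>)) *\<^sub>v v) > 0"
  shows "(\<lambda>n. let Dr = jac_exp M (r n) (g n) \<beta>0;
                  Dm = jac_exp M q (\<lambda>\<beta> \<omega>. tovec (m \<beta> (Y \<omega>) (Z \<omega>))) \<beta>0 in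
             fro_norm (transpose_mat Dr * minv (smom M (r n) (g n \<beta>0)) * Dr
                       - transpose_mat Dm * minv (smom M q (\<lambda>\<omega>. tovec (mZ \<omega> - S \<omega>))) * Dm))
         \<longlonglongrightarrow> 0"
proof -
  interpret randomized_treatment M X MX Z K \<pi>
    using P Z_meas X_meas Z_range pi_def indep
    by (simp add: randomized_treatment_def randomized_treatment_axioms_def)
  define d where "d n = r n - q" for n
  define Dm where "Dm = jac_exp M q (\<lambda>\<beta> \<omega>. tovec (m \<beta> (Y \<omega>) (Z \<omega>))) \<beta>0"
  define Sig where "Sig = smom M q (\<lambda>\<omega>. tovec (mZ \<omega> - S \<omega>))"
  have r: "r n = q + d n" for n using r_gt by (simp add: d_def less_imp_le)
  have g_\<beta>0: "g n \<beta>0 = (\<lambda>\<omega>. tovec (mZ \<omega>) @\<^sub>v (W n *\<^sub>v Vvec (d n) Z X \<pi> (kk n) (h n) \<omega>))" for n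
    by (simp add: g_def mZ_def gvec_def d_def q_def fun_eq_iff)
  have S: "S = aug_term M X MX Z K \<pi> mZ" by (simp add: S_def mZ_def)
  have det_Sig: "det Sig \<noteq> 0"
    using det_neq_0_if_pos_def[OF smom_carrier] C3 unfolding Sig_def by blast
  have det_g: "det (smom M (q + d n) (g n \<beta>0)) \<noteq> 0" for n
    using C1ii det_neq_0_if_not_eigenvalue_0[OF smom_carrier] unfolding r by force
  have P_lim: "\<forall>a b. a < q \<longrightarrow> b < q \<longrightarrow>
      (\<lambda>n. minv (smom M (q + d n) (g n \<beta>0)) $$ (a,b)) \<longlonglongrightarrow> minv Sig $$ (a,b)"
  proof (intro allI impI)
    fix a b assume ab: "a < q" "b < q"
    show "(\<lambda>n. minv (smom M (q + d n) (g n \<beta>0)) $$ (a,b)) \<longlonglongrightarrow> minv Sig $$ (a,b)"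
      unfolding g_\<beta>0 Sig_def S q_def
    proof (rule inverse_second_moment_block_tendsto[where B=Mb])
      show "\<forall>n. \<forall>\<omega>\<in>space M. \<forall>a<CARD('q) + d n.
          \<bar>vec_index (tovec (mZ \<omega>) @\<^sub>v (W n *\<^sub>v Vvec (d n) Z X \<pi> (kk n) (h n) \<omega>)) a\<bar> \<le> Mb"
        using C1i g_\<beta>0 unfolding r q_def by metis
      show "(\<lambda>n. LINT \<omega>|M. (let e = A n *\<^sub>v (W n *\<^sub>v Vvec (d n) Z X \<pi> (kk n) (h n) \<omega>)
          - tovec (aug_term M X MX Z K \<pi> mZ \<omega>) in e \<bullet> e)) \<longlonglongrightarrow> 0"
        using C1iii unfolding V_def S d_def q_def .
    qed (use m_meas kk_range h_meas W_dim A_dim det_g[unfolded g_\<beta>0] det_Sig[unfolded Sig_def S] ab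
        in \<open>auto simp: mZ_def d_def q_def\<close>)
  qed
  have D_rows: "\<forall>n a j. a < q + d n \<longrightarrow> j < q \<longrightarrow>
      jac_exp M (q + d n) (g n) \<beta>0 $$ (a,j) = (if a < q then Dm $$ (a,j) else 0)"
  proof (intro allI impI)
    fix n a j assume "a < q + d n" "j < q"
    moreover have "W n \<in> carrier_mat (d n) (d n)" using W_dim by (simp add: d_def)
    ultimately show "jac_exp M (q + d n) (g n) \<beta>0 $$ (a,j) = (if a < q then Dm $$ (a,j) else 0)"
      unfolding g_def Dm_def q_def by (intro jac_exp_gvec)
  qed
  have carriers: "Dm \<in> carrier_mat q q" "minv Sig \<in> carrier_mat q q"
    "\<forall>n. jac_exp M (q + d n) (g n) \<beta>0 \<in> carrier_mat (q + d n) q"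
    "\<forall>n. minv (smom M (q + d n) (g n \<beta>0)) \<in> carrier_mat (q + d n) (q + d n)"
    using minv_inverse(3)[OF smom_carrier det_Sig[unfolded Sig_def]] minv_inverse(3)[OF smom_carrier det_g]
    by (simp_all add: Dm_def Sig_def jac_exp_def q_def)
  show ?thesis
    unfolding Let_def r Dm_def[symmetric] Sig_def[symmetric]
    by (rule fro_norm_congruence_tendsto[OF carriers D_rows P_lim])
qed

end
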